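(* Let $X$ be a uniformly convex, uniformly smooth real Banach space with normalized duality map $J$. For $a,b\in S^*$ with $b\notin\{a,-a\}$, the polar $W(a,b)^\circ$ is convex if and only if $J^{-1}(\delta(a,b))\subseteq\mathcal M$ for some meridian $\mathcal M$ of $S$. Consequently, all wedges $W(a,b)$ in $X$ have convex polars if and only if $J^{-1}$ maps every meridian of $S^*$ into a meridian of $S$.
   Context: $X^*$ is the norm dual of $X$ with pairing $\langle\cdot,\cdot\rangle$; $S=\{x\in X:\|x\|=1\}$, $S^*=\{c\in X^*:\|c\|_{X^*}=1\}$. The normalized duality map $J:X\to X^*$ is defined by $\langle Jx,x\rangle=\|Jx\|_{X^*}\|x\|=\|x\|^2=\|Jx\|_{X^*}^2$; it is a homogeneous homeomorphism with inverse $J^{-1}$. A meridian of $S$ (resp. $S^*$) is a set $D\cap S$ (resp. $D^*\cap S^*$) with $D$ (resp. $D^*$) a two-dimensional linear subspace of $X$ (resp. $X^*$). For $a,b\in S^*$, $b\notin\{a,-a\}$, $\delta(a,b)=\{(\lambda a+\mu b)/\|\lambda a+\mu b\|_{X^*}:\lambda,\mu\ge0,(\lambda,\mu)\ne(0,0)\}$, and the wedge is $W(a,b)=\{x\in X:\langle c,x\rangle\le 0\ \forall c\in\delta(a,b)\}$. The polar of a closed convex cone $K$ is $K^\circ=\{x\in X:P_Kx=0\}$ with $P_K$ the metric projection onto $K$. *)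

theory Defs
  imports "HOL-Analysis.Analysis"
begin

text \<open>The norm dual of X is the type of bounded linear functionals 'a \<Rightarrow>L real
  with the operator norm; the pairing is blinfun_apply c x.\<close>

definition uniformly_convex_space :: "'a::real_normed_vector itself \<Rightarrow> bool" where
  "uniformly_convex_space _ \<longleftrightarrow>
     (\<forall>e>0. \<exists>d>0. \<forall>x y::'a. norm x \<le> 1 \<longrightarrow> norm y \<le> 1 \<longrightarrow> norm (x - y) \<ge> e
        \<longrightarrow> norm ((x + y) /\<^sub>R 2) \<le> 1 - d)"

definition uniformly_smooth_space :: "'a::real_normed_vector itself \<Rightarrow> bool" where
  "uniformly_smooth_space _ \<longleftrightarrow>
     (\<forall>e>0. \<exists>d>0. \<forall>t. 0 < t \<and> t < d \<longrightarrow>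
        (\<forall>x y::'a. norm x = 1 \<longrightarrow> norm y = 1 \<longrightarrow>
           (norm (x + t *\<^sub>R y) + norm (x - t *\<^sub>R y)) / 2 - 1 \<le> e * t))"

text \<open>Normalized duality map J (single-valued in smooth spaces).\<close>
definition duality_map :: "'a::real_normed_vector \<Rightarrow> ('a \<Rightarrow>\<^sub>L real)" where
  "duality_map x = (THE c. blinfun_apply c x = (norm x)\<^sup>2 \<and> norm c = norm x)"

definition meridian :: "'a::real_normed_vector set \<Rightarrow> bool" where
  "meridian M \<longleftrightarrow> (\<exists>D. subspace D \<and> dim D = 2 \<and> M = D \<inter> sphere 0 1)"

definition delta_arc :: "('a::real_normed_vector \<Rightarrow>\<^sub>L real) \<Rightarrow> ('a \<Rightarrow>\<^sub>L real) \<Rightarrow> ('a \<Rightarrow>\<^sub>L real) set" where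
  "delta_arc a b = {(1 / norm (l *\<^sub>R a + m *\<^sub>R b)) *\<^sub>R (l *\<^sub>R a + m *\<^sub>R b) | l m.
       l \<ge> 0 \<and> m \<ge> 0 \<and> (l, m) \<noteq> (0, 0)}"

definition wedge :: "('a::real_normed_vector \<Rightarrow>\<^sub>L real) \<Rightarrow> ('a \<Rightarrow>\<^sub>L real) \<Rightarrow> 'a set" where
  "wedge a b = {x. \<forall>c\<in>delta_arc a b. blinfun_apply c x \<le> 0}"

definition metric_proj :: "'a::metric_space set \<Rightarrow> 'a \<Rightarrow> 'a" where
  "metric_proj K x = (THE y. y \<in> K \<and> (\<forall>z\<in>K. dist x y \<le> dist x z))"

definition polar_cone :: "'a::real_normed_vector set \<Rightarrow> 'a set" where
  "polar_cone K = {x. metric_proj K x = 0}"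

end

theory Submission
  imports Defs
begin

text \<open>Uniform smoothness makes the one-sided derivative of the norm linear, which identifies \<open>J x\<close>
  with \<open>\<parallel>x\<parallel>\<close> times that derivative; uniform convexity gives norm attainment and strict
  convexity, so \<open>J\<close> is a bijection with a continuous, odd, homogeneous inverse, and metric
  projections onto closed convex sets exist and are unique. For a closed convex cone \<open>K\<close> the
  projection of \<open>x\<close> is \<open>0\<close> iff \<open>J x\<close> is nonpositive on \<open>K\<close>; with Farkas' lemma the polar of
  \<open>W(a, b)\<close> becomes \<open>J\<^sup>-\<^sup>1\<close> of the cone spanned by \<open>a\<close> and \<open>b\<close>, i.e. the union of the rays
  through the simple arc \<open>w = J\<^sup>-\<^sup>1 \<circ> \<delta>(a, b)\<close> from \<open>u = J\<^sup>-\<^sup>1 a\<close> to \<open>v = J\<^sup>-\<^sup>1 b\<close>.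

  If \<open>w\<close> lies in the plane of \<open>u\<close> and \<open>v\<close>, it cannot leave the quadrant between them without
  passing through \<open>\<plusminus>u\<close> or \<open>\<plusminus>v\<close>, so the polar is the convex cone spanned by \<open>u\<close> and \<open>v\<close>.
  Conversely, a convex polar contains the segment \<open>[u, v]\<close>, whose normalisation is a path from
  \<open>u\<close> to \<open>v\<close> inside \<open>w\<close>; such a path covers the arc \<open>w\<close>, which therefore lies in the plane.
  The statement about all wedges follows because a meridian of \<open>S\<^sup>*\<close> is covered by
  \<open>\<delta>(a, b)\<close>, \<open>\<delta>(a, -b)\<close> and their antipodes.\<close>

section \<open>One-sided derivative of the norm\<close>

definition norm_diff_quot :: "'a::real_normed_vector \<Rightarrow> 'a \<Rightarrow> real \<Rightarrow> real" where
  "norm_diff_quot x h t = (norm (x + t *\<^sub>R h) - norm x) / t"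

text \<open>By convexity of the norm the difference quotient is nondecreasing in \<open>t\<close>, so this infimum
  is the right derivative, the limit as \<open>t \<rightarrow> 0\<^sup>+\<close>.\<close>

definition norm_dir_deriv :: "'a::real_normed_vector \<Rightarrow> 'a \<Rightarrow> real" where
  "norm_dir_deriv x h = Inf (norm_diff_quot x h ` {0<..})"

lemma abs_norm_diff_quot_le:
  assumes "t > 0"
  shows "\<bar>norm_diff_quot x h t\<bar> \<le> norm h"
proof -
  have "\<bar>norm (x + t *\<^sub>R h) - norm x\<bar> \<le> norm (t *\<^sub>R h)"
    by (metis add_diff_cancel_left' norm_triangle_ineq3)
  also have "\<dots> = t * norm h" using assms by simp
  finally show ?thesis
    using assms unfolding norm_diff_quot_def by (simp add: abs_div divide_le_eq mult.commute)
qed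

lemma norm_diff_quot_mono:
  assumes "0 < s" "s \<le> t"
  shows "norm_diff_quot x h s \<le> norm_diff_quot x h t"
proof -
  have t: "t > 0" using assms by simp
  have eq: "x + s *\<^sub>R h = (1 - s/t) *\<^sub>R x + (s/t) *\<^sub>R (x + t *\<^sub>R h)"
    using t by (simp add: algebra_simps)
  have "norm (x + s *\<^sub>R h) \<le> norm ((1 - s/t) *\<^sub>R x) + norm ((s/t) *\<^sub>R (x + t *\<^sub>R h))"
    unfolding eq by (rule norm_triangle_ineq)
  also have "\<dots> = (1 - s/t) * norm x + (s/t) * norm (x + t *\<^sub>R h)"
    using assms t by simp
  finally have "norm (x + s *\<^sub>R h) - norm x \<le> (s/t) * (norm (x + t *\<^sub>R h) - norm x)"
    by (simp add: algebra_simps)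
  then show ?thesis
    using assms t unfolding norm_diff_quot_def by (simp add: divide_simps mult.commute)
qed

lemma norm_diff_quot_scaleR:
  assumes "r > 0"
  shows "norm_diff_quot x (r *\<^sub>R h) t = r * norm_diff_quot x h (r * t)"
  using assms by (simp add: norm_diff_quot_def mult.commute)

lemma norm_dir_deriv_le:
  assumes "t > 0"
  shows "norm_dir_deriv x h \<le> norm_diff_quot x h t"
proof -
  have "bdd_below (norm_diff_quot x h ` {0<..})"
    using abs_norm_diff_quot_le[of _ x h]
    by (intro bdd_belowI2[of _ "- norm h"]) (force simp: abs_le_iff minus_le_iff)
  then show ?thesis unfolding norm_dir_deriv_def using assms by (intro cInf_lower) auto
qed

lemma norm_dir_deriv_greatest:
  "(\<And>t. t > 0 \<Longrightarrow> m \<le> norm_diff_quot x h t) \<Longrightarrow> m \<le> norm_dir_deriv x h"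
  unfolding norm_dir_deriv_def by (rule cInf_greatest) auto

lemma norm_dir_deriv_eqI:
  assumes "\<And>t. t > 0 \<Longrightarrow> norm_diff_quot x h t = k"
  shows "norm_dir_deriv x h = k"
proof (rule antisym)
  show "norm_dir_deriv x h \<le> k" using norm_dir_deriv_le[of 1 x h] assms[of 1] by simp
  show "k \<le> norm_dir_deriv x h" using assms by (intro norm_dir_deriv_greatest) simp
qed

lemma abs_norm_dir_deriv_le: "\<bar>norm_dir_deriv x h\<bar> \<le> norm h"
proof -
  have "norm_dir_deriv x h \<le> norm h"
    using norm_dir_deriv_le[of 1 x h] abs_norm_diff_quot_le[of 1 x h] by simp
  moreover have "- norm h \<le> norm_dir_deriv x h"
    using abs_norm_diff_quot_le[of _ x h]
    by (intro norm_dir_deriv_greatest) (force simp: abs_le_iff minus_le_iff)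
  ultimately show ?thesis by simp
qed

lemma norm_dir_deriv_approx:
  assumes "e > 0"
  obtains t where "t > 0" "\<And>s. 0 < s \<Longrightarrow> s \<le> t \<Longrightarrow> norm_diff_quot x h s < norm_dir_deriv x h + e"
proof -
  obtain t where t: "t > 0" "norm_diff_quot x h t < norm_dir_deriv x h + e"
    using norm_dir_deriv_greatest[of "norm_dir_deriv x h + e" x h] assms
    by (auto simp: not_less[symmetric])
  show ?thesis
  proof (rule that[OF t(1)])
    fix s assume "0 < s" "s \<le> t"
    then show "norm_diff_quot x h s < norm_dir_deriv x h + e"
      using norm_diff_quot_mono[of s t x h] t(2) by linarith
  qed
qed

lemma norm_dir_deriv_zero: "norm_dir_deriv x 0 = 0"
  by (rule norm_dir_deriv_eqI) (simp add: norm_diff_quot_def)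

lemma norm_dir_deriv_self: "norm_dir_deriv x x = norm x"
proof (rule norm_dir_deriv_eqI)
  fix t :: real assume t: "t > 0"
  have "norm (x + t *\<^sub>R x) = (1 + t) * norm x"
    using t by (simp add: scaleR_add_left[of 1 t x, simplified, symmetric])
  then show "norm_diff_quot x x t = norm x" using t unfolding norm_diff_quot_def
    by (simp add: algebra_simps)
qed

lemma norm_dir_deriv_scaleR:
  assumes r: "r > 0"
  shows "norm_dir_deriv x (r *\<^sub>R h) = r * norm_dir_deriv x h"
proof (rule antisym)
  have "norm_dir_deriv x (r *\<^sub>R h) / r \<le> norm_dir_deriv x h"
  proof (rule norm_dir_deriv_greatest)
    fix t :: real assume t: "t > 0"
    have "norm_dir_deriv x (r *\<^sub>R h) \<le> norm_diff_quot x (r *\<^sub>R h) (t / r)"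
      using t r by (intro norm_dir_deriv_le) simp
    also have "\<dots> = r * norm_diff_quot x h t" using r by (simp add: norm_diff_quot_scaleR)
    finally show "norm_dir_deriv x (r *\<^sub>R h) / r \<le> norm_diff_quot x h t"
      using r by (simp add: divide_simps mult.commute)
  qed
  then show "norm_dir_deriv x (r *\<^sub>R h) \<le> r * norm_dir_deriv x h"
    using r by (simp add: divide_simps mult.commute)
  show "r * norm_dir_deriv x h \<le> norm_dir_deriv x (r *\<^sub>R h)"
  proof (rule norm_dir_deriv_greatest)
    fix t :: real assume t: "t > 0"
    have "r * norm_dir_deriv x h \<le> r * norm_diff_quot x h (r * t)"
      using r t by (intro mult_left_mono norm_dir_deriv_le) auto
    then show "r * norm_dir_deriv x h \<le> norm_diff_quot x (r *\<^sub>R h) t"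
      using r by (simp add: norm_diff_quot_scaleR)
  qed
qed

text \<open>Write \<open>x + t(h\<^sub>1 + h\<^sub>2)\<close> as the midpoint of \<open>x + 2t h\<^sub>1\<close> and \<open>x + 2t h\<^sub>2\<close>.\<close>

lemma norm_diff_quot_add_le:
  assumes t: "t > 0"
  shows "norm_diff_quot x (h1 + h2) t \<le> norm_diff_quot x h1 (2*t) + norm_diff_quot x h2 (2*t)"
proof -
  define A B where "A = norm (x + (2*t) *\<^sub>R h1)" and "B = norm (x + (2*t) *\<^sub>R h2)"
  have eq: "x + t *\<^sub>R (h1 + h2) = (1/2) *\<^sub>R (x + (2*t) *\<^sub>R h1) + (1/2) *\<^sub>R (x + (2*t) *\<^sub>R h2)"
    by (simp add: algebra_simps flip: scaleR_add_left)
  have "norm (x + t *\<^sub>R (h1 + h2)) \<le> (A + B) / 2"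
    unfolding eq A_def B_def
    using norm_triangle_ineq[of "(1/2) *\<^sub>R (x + (2*t) *\<^sub>R h1)" "(1/2) *\<^sub>R (x + (2*t) *\<^sub>R h2)"]
    by simp
  then have "norm_diff_quot x (h1 + h2) t \<le> ((A + B) / 2 - norm x) / t"
    unfolding norm_diff_quot_def using t by (intro divide_right_mono) auto
  also have "\<dots> = norm_diff_quot x h1 (2*t) + norm_diff_quot x h2 (2*t)"
    unfolding norm_diff_quot_def A_def B_def using t by (simp add: field_simps)
  finally show ?thesis .
qed

lemma norm_dir_deriv_add_le:
  "norm_dir_deriv x (h1 + h2) \<le> norm_dir_deriv x h1 + norm_dir_deriv x h2"
proof (rule field_le_epsilon)
  fix e :: real assume e: "e > 0"
  obtain t1 where t1: "t1 > 0"
      "\<And>s. 0 < s \<Longrightarrow> s \<le> t1 \<Longrightarrow> norm_diff_quot x h1 s < norm_dir_deriv x h1 + e/2"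
    using norm_dir_deriv_approx[of "e/2"] e by auto
  obtain t2 where t2: "t2 > 0"
      "\<And>s. 0 < s \<Longrightarrow> s \<le> t2 \<Longrightarrow> norm_diff_quot x h2 s < norm_dir_deriv x h2 + e/2"
    using norm_dir_deriv_approx[of "e/2"] e by auto
  define t where "t = min t1 t2 / 2"
  have t: "t > 0" "2*t \<le> t1" "2*t \<le> t2" using t1 t2 by (auto simp: t_def)
  have "norm_dir_deriv x (h1 + h2) \<le> norm_diff_quot x (h1 + h2) t"
    using t(1) by (rule norm_dir_deriv_le)
  also have "\<dots> \<le> norm_diff_quot x h1 (2*t) + norm_diff_quot x h2 (2*t)"
    using t(1) by (rule norm_diff_quot_add_le)
  finally show "norm_dir_deriv x (h1 + h2) \<le> norm_dir_deriv x h1 + norm_dir_deriv x h2 + e"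
    using t1(2)[of "2*t"] t2(2)[of "2*t"] t by linarith
qed

text \<open>Uniform smoothness, applied to the unit vectors \<open>x/\<parallel>x\<parallel>\<close> and \<open>h/\<parallel>h\<parallel>\<close>.\<close>

lemma uniformly_smooth_norm_diff_quot_sum:
  assumes us: "uniformly_smooth_space TYPE('a::real_normed_vector)"
    and x: "(x::'a) \<noteq> 0" and h: "h \<noteq> 0" and e: "e > 0"
  obtains s where "s > 0" "norm_diff_quot x h s + norm_diff_quot x (-h) s \<le> e"
proof -
  define n where "n = norm x"
  have n: "n > 0" using x by (simp add: n_def)
  have hn: "norm h > 0" using h by simp
  obtain d where d: "d > 0" and dd: "\<And>t. 0 < t \<and> t < d \<Longrightarrow> (\<forall>x y::'a. norm x = 1 \<longrightarrow> norm y = 1 \<longrightarrow>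
       (norm (x + t *\<^sub>R y) + norm (x - t *\<^sub>R y)) / 2 - 1 \<le> (e / (2 * norm h)) * t)"
    using us e hn unfolding uniformly_smooth_space_def
    by (metis divide_pos_pos mult_pos_pos zero_less_numeral)
  define t where "t = d / 2"
  have t: "0 < t" "t < d" using d by (auto simp: t_def)
  define x' where "x' = (1/n) *\<^sub>R x"
  define y' where "y' = (1 / norm h) *\<^sub>R h"
  have "norm x' = 1" "norm y' = 1" using n hn by (simp_all add: x'_def y'_def n_def)
  then have key: "(norm (x' + t *\<^sub>R y') + norm (x' - t *\<^sub>R y')) / 2 - 1 \<le> (e / (2 * norm h)) * t"
    using dd[of t] t by blast
  define s where "s = t * n / norm h"
  have s: "s > 0" using t n hn by (simp add: s_def)
  have "x + s *\<^sub>R h = n *\<^sub>R (x' + t *\<^sub>R y')" "x + s *\<^sub>R (-h) = n *\<^sub>R (x' - t *\<^sub>R y')"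
    using n hn by (simp_all add: x'_def y'_def s_def algebra_simps)
  then have "norm (x + s *\<^sub>R h) + norm (x + s *\<^sub>R (-h)) = n * (norm (x' + t *\<^sub>R y') + norm (x' - t *\<^sub>R y'))"
    using n by (simp add: distrib_left)
  also have "\<dots> \<le> n * (2 + e * t / norm h)"
    using key n by (intro mult_left_mono) (auto simp: field_simps)
  finally have sum: "norm (x + s *\<^sub>R h) + norm (x + s *\<^sub>R (-h)) - 2 * n \<le> n * e * t / norm h"
    by (simp add: algebra_simps)
  have "norm_diff_quot x h s + norm_diff_quot x (-h) s
      = (norm (x + s *\<^sub>R h) + norm (x + s *\<^sub>R (-h)) - 2 * n) / s"
    unfolding norm_diff_quot_def n_def by (simp add: diff_divide_distrib add_divide_distrib)
  also have "\<dots> \<le> (n * e * t / norm h) / s"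
    using sum s by (intro divide_right_mono) auto
  also have "\<dots> = e" using n hn t by (simp add: s_def field_simps)
  finally show ?thesis using s that by blast
qed

context
  assumes us: "uniformly_smooth_space TYPE('a::real_normed_vector)"
begin

lemma norm_dir_deriv_uminus:
  assumes x: "(x::'a) \<noteq> 0"
  shows "norm_dir_deriv x (-h) = - norm_dir_deriv x h"
proof -
  have "0 \<le> norm_dir_deriv x h + norm_dir_deriv x (-h)"
    using norm_dir_deriv_add_le[of x h "-h"] by (simp add: norm_dir_deriv_zero)
  moreover have "norm_dir_deriv x h + norm_dir_deriv x (-h) \<le> e" if e: "e > 0" for e
  proof (cases "h = 0")
    case False
    then obtain s where "s > 0" "norm_diff_quot x h s + norm_diff_quot x (-h) s \<le> e"
      using uniformly_smooth_norm_diff_quot_sum[OF us x _ e] by blast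
    then show ?thesis using norm_dir_deriv_le[of s x h] norm_dir_deriv_le[of s x "-h"] by linarith
  qed (use e in \<open>simp add: norm_dir_deriv_zero\<close>)
  ultimately show ?thesis
    using field_le_epsilon[of "norm_dir_deriv x h + norm_dir_deriv x (-h)" 0] by simp
qed

lemma bounded_linear_norm_dir_deriv:
  assumes x: "(x::'a) \<noteq> 0"
  shows "bounded_linear (norm_dir_deriv x)"
proof (rule bounded_linear_intro)
  fix h1 h2 :: 'a
  show "norm_dir_deriv x (h1 + h2) = norm_dir_deriv x h1 + norm_dir_deriv x h2"
    using norm_dir_deriv_add_le[of x h1 h2] norm_dir_deriv_add_le[of x "-h1" "-h2"]
      norm_dir_deriv_uminus[OF x, of "h1 + h2"] norm_dir_deriv_uminus[OF x, of h1]
      norm_dir_deriv_uminus[OF x, of h2]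
    by (simp add: add.commute)
next
  fix r :: real and h :: 'a
  consider "r > 0" | "r = 0" | "-r > 0" by linarith
  then show "norm_dir_deriv x (r *\<^sub>R h) = r *\<^sub>R norm_dir_deriv x h"
  proof cases
    case 3
    then show ?thesis
      using norm_dir_deriv_scaleR[OF 3, of x h] norm_dir_deriv_uminus[OF x, of "(-r) *\<^sub>R h"] by simp
  qed (simp_all add: norm_dir_deriv_scaleR norm_dir_deriv_zero)
next
  fix h :: 'a
  show "norm (norm_dir_deriv x h) \<le> norm h * 1" using abs_norm_dir_deriv_le[of x h] by simp
qed

end

section \<open>The duality map\<close>

lemma blinfun_apply_le_norm: "blinfun_apply c x \<le> norm c * norm x"
  by (metis norm_blinfun real_norm_def abs_ge_self order_trans)

context
  assumes us: "uniformly_smooth_space TYPE('a::real_normed_vector)"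
begin

text \<open>A norming functional of \<open>x\<close> is bounded above by the one-sided derivative of the norm at \<open>x\<close>
  in every direction; smoothness turns this into equality, hence uniqueness.\<close>

lemma norming_functional_apply:
  assumes cx: "blinfun_apply c (x::'a) = (norm x)^2" and cn: "norm c \<le> norm x"
  shows "blinfun_apply c h = norm x * norm_dir_deriv x h"
proof (cases "x = 0")
  case True
  then show ?thesis using cn by simp
next
  case x: False
  have n: "norm x > 0" using x by simp
  have le: "blinfun_apply c k / norm x \<le> norm_dir_deriv x k" for k
  proof (rule norm_dir_deriv_greatest)
    fix t :: real assume t: "t > 0"
    have "(norm x)^2 + t * blinfun_apply c k = blinfun_apply c (x + t *\<^sub>R k)"
      using cx by (simp add: blinfun.add_right blinfun.scaleR_right)
    also have "\<dots> \<le> norm x * norm (x + t *\<^sub>R k)"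
      using blinfun_apply_le_norm[of c "x + t *\<^sub>R k"] cn
      by (meson mult_right_mono norm_ge_zero order_trans)
    finally show "blinfun_apply c k / norm x \<le> norm_diff_quot x k t"
      using n t unfolding norm_diff_quot_def by (simp add: field_simps power2_eq_square)
  qed
  have "- (blinfun_apply c h / norm x) \<le> - norm_dir_deriv x h"
    using le[of "-h"] by (simp add: blinfun.minus_right norm_dir_deriv_uminus[OF us x])
  with le[of h] have "blinfun_apply c h / norm x = norm_dir_deriv x h" by linarith
  then show ?thesis using n by (simp add: field_simps)
qed

lemma norming_functional_exists: "\<exists>c. blinfun_apply c (x::'a) = (norm x)^2 \<and> norm c = norm x"
proof -
  define c where "c = Blinfun (\<lambda>h. norm x * norm_dir_deriv x h)"
  have c: "blinfun_apply c h = norm x * norm_dir_deriv x h" for h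
  proof (cases "x = 0")
    case False
    then show ?thesis unfolding c_def
      by (simp add: bounded_linear_Blinfun_apply bounded_linear_const_mult
          bounded_linear_norm_dir_deriv[OF us])
  qed (simp add: c_def bounded_linear_Blinfun_apply)
  have cx: "blinfun_apply c x = (norm x)^2"
    by (simp add: c norm_dir_deriv_self power2_eq_square)
  have "norm c \<le> norm x"
    using abs_norm_dir_deriv_le[of x]
    by (intro norm_blinfun_bound) (auto simp: c abs_mult mult_left_mono)
  moreover have "norm x \<le> norm c" if "x \<noteq> 0"
    using blinfun_apply_le_norm[of c x] that by (simp add: cx power2_eq_square)
  ultimately show ?thesis using cx by (cases "x = 0") (auto intro: exI[of _ c])
qed

lemma duality_map_eqI:
  assumes cx: "blinfun_apply c (x::'a) \<ge> (norm x)^2" and cn: "norm c \<le> norm x"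
  shows "duality_map x = c"
proof -
  have "blinfun_apply c x \<le> norm x * norm x"
    using blinfun_apply_le_norm[of c x] cn by (meson mult_right_mono norm_ge_zero order_trans)
  then have cx': "blinfun_apply c x = (norm x)^2" using cx by (simp add: power2_eq_square)
  have "norm x \<le> norm c"
    using blinfun_apply_le_norm[of c x] cx' by (cases "x = 0") (auto simp: power2_eq_square)
  then have "blinfun_apply c x = (norm x)^2 \<and> norm c = norm x" using cx' cn by simp
  then show ?thesis
    unfolding duality_map_def
  proof (rule the_equality)
    fix c' assume c': "blinfun_apply c' x = (norm x)^2 \<and> norm c' = norm x"
    show "c' = c"
      using norming_functional_apply[OF cx' cn] norming_functional_apply[of c' x] c'
      by (intro blinfun_eqI) simp
  qed
qed

lemma duality_map_self: "blinfun_apply (duality_map x) (x::'a) = (norm x)^2"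
  and norm_duality_map: "norm (duality_map x) = norm x"
  using norming_functional_exists[of x] duality_map_eqI by (metis order.refl)+

lemma duality_map_apply: "blinfun_apply (duality_map (x::'a)) h = norm x * norm_dir_deriv x h"
  by (simp add: norming_functional_apply duality_map_self norm_duality_map)

lemma duality_map_scaleR: "duality_map (r *\<^sub>R (x::'a)) = r *\<^sub>R duality_map x"
proof (rule duality_map_eqI)
  have "(norm (r *\<^sub>R x))^2 = r * r * (norm x)^2"
    by (simp add: power_mult_distrib power2_eq_square)
  then show "(norm (r *\<^sub>R x))^2 \<le> blinfun_apply (r *\<^sub>R duality_map x) (r *\<^sub>R x)"
    by (simp add: blinfun.scaleR_left blinfun.scaleR_right duality_map_self)
qed (simp add: norm_duality_map)

lemma duality_map_uminus: "duality_map (- (x::'a)) = - duality_map x"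
  using duality_map_scaleR[of "-1" x] by simp

lemma duality_map_zero: "duality_map (0::'a) = 0"
  using duality_map_scaleR[of 0 0] by simp

end

section \<open>Uniform convexity\<close>

lemma uniformly_convex_spaceD:
  assumes "uniformly_convex_space TYPE('a::real_normed_vector)" "e > 0"
  obtains d where "d > 0" "\<And>x y::'a. \<And>R. norm x \<le> R \<Longrightarrow> norm y \<le> R \<Longrightarrow>
    (1 - d) * R < norm ((x + y) /\<^sub>R 2) \<Longrightarrow> norm (x - y) < e * R"
proof -
  obtain d where d: "d > 0" and H: "\<forall>x y::'a. norm x \<le> 1 \<longrightarrow> norm y \<le> 1 \<longrightarrow> norm (x - y) \<ge> e
      \<longrightarrow> norm ((x + y) /\<^sub>R 2) \<le> 1 - d"
    using assms unfolding uniformly_convex_space_def by blast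
  have "norm (x - y) < e * R"
    if x: "norm x \<le> R" and y: "norm y \<le> R" and mid: "(1 - d) * R < norm ((x + y) /\<^sub>R 2)"
    for x y :: 'a and R
  proof -
    have R: "R > 0"
    proof (rule ccontr)
      assume "\<not> R > 0"
      then have "norm x \<le> 0" "norm y \<le> 0" "R = 0" using x y norm_ge_zero[of x] by linarith+
      then show False using mid by simp
    qed
    have "(x + y) /\<^sub>R 2 = R *\<^sub>R (((1/R) *\<^sub>R x + (1/R) *\<^sub>R y) /\<^sub>R 2)"
      using R by (simp add: scaleR_right_distrib)
    then have "1 - d < norm (((1/R) *\<^sub>R x + (1/R) *\<^sub>R y) /\<^sub>R 2)"
      using mid R by (simp add: mult.commute mult_less_cancel_left_pos)
    moreover have "norm ((1/R) *\<^sub>R x) \<le> 1" "norm ((1/R) *\<^sub>R y) \<le> 1" using x y R by simp_all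
    ultimately have "norm ((1/R) *\<^sub>R x - (1/R) *\<^sub>R y) < e" using H by (meson not_le)
    then show ?thesis using R by (simp add: pos_divide_less_eq flip: scaleR_diff_right)
  qed
  with d that show ?thesis by blast
qed

lemma uniformly_convex_midpoint_eq:
  assumes uc: "uniformly_convex_space TYPE('a::real_normed_vector)"
    and u: "norm (u::'a) \<le> r" and v: "norm v \<le> r" and mid: "r \<le> norm ((u + v) /\<^sub>R 2)"
  shows "u = v"
proof (rule ccontr)
  assume ne: "u \<noteq> v"
  have r: "r > 0"
  proof (rule ccontr)
    assume "\<not> r > 0"
    then have "norm u \<le> 0" "norm v \<le> 0" using u v by linarith+
    with ne show False by simp
  qed
  define e where "e = norm (u - v) / r"
  have e: "e > 0" using ne r by (simp add: e_def)
  obtain d where "d > 0" and D: "\<And>x y::'a. \<And>R. norm x \<le> R \<Longrightarrow> norm y \<le> R \<Longrightarrow>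
      (1 - d) * R < norm ((x + y) /\<^sub>R 2) \<Longrightarrow> norm (x - y) < e * R"
    using uniformly_convex_spaceD[OF uc e] by metis
  have "(1 - d) * r < r" using \<open>d > 0\<close> r by (simp add: algebra_simps)
  then have "(1 - d) * r < norm ((u + v) /\<^sub>R 2)" using mid by linarith
  then have "norm (u - v) < e * r" by (rule D[OF u v])
  then show False using r by (simp add: e_def)
qed

text \<open>The common core of norm attainment and of the existence of nearest points: a sequence whose
  norms and pairwise midpoint norms all tend to the same \<open>r > 0\<close> is Cauchy.\<close>

lemma uniformly_convex_Cauchy:
  assumes uc: "uniformly_convex_space TYPE('a::real_normed_vector)"
    and r: "r > 0" and eps: "\<epsilon> \<longlonglongrightarrow> 0"
    and le: "\<And>n. norm (Y n :: 'a) \<le> r + \<epsilon> n"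
    and mid: "\<And>m n. r - (\<epsilon> m + \<epsilon> n) \<le> norm ((Y m + Y n) /\<^sub>R 2)"
  shows "Cauchy Y"
  unfolding Cauchy_def
proof (intro allI impI)
  fix e :: real assume e: "e > 0"
  have "e / (2 * r) > 0" using e r by simp
  then obtain d where d: "d > 0" and D: "\<And>x y::'a. \<And>R. norm x \<le> R \<Longrightarrow> norm y \<le> R \<Longrightarrow>
      (1 - d) * R < norm ((x + y) /\<^sub>R 2) \<Longrightarrow> norm (x - y) < e / (2 * r) * R"
    using uniformly_convex_spaceD[OF uc] by metis
  define \<eta> where "\<eta> = min r (r * d / 3)"
  have \<eta>: "\<eta> > 0" "\<eta> \<le> r" "3 * \<eta> \<le> r * d" using r d by (auto simp: \<eta>_def)
  obtain N where N: "\<And>n. n \<ge> N \<Longrightarrow> \<bar>\<epsilon> n\<bar> < \<eta>"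
    using LIMSEQ_D[OF eps \<eta>(1)] by auto
  define R where "R = r + \<eta>"
  have R: "R \<le> 2 * r" using \<eta> by (simp add: R_def)
  show "\<exists>N. \<forall>m\<ge>N. \<forall>n\<ge>N. dist (Y m) (Y n) < e"
  proof (intro exI[of _ N] allI impI)
    fix m n assume mn: "N \<le> m" "N \<le> n"
    have "norm (Y k) \<le> R" if "N \<le> k" for k
      using le[of k] N[OF that] by (simp add: R_def)
    moreover have "(1 - d) * R < norm ((Y m + Y n) /\<^sub>R 2)"
    proof -
      have "(1 - d) * R = r - 2 * \<eta> + (3 * \<eta> - r * d) - \<eta> * d"
        by (simp add: R_def algebra_simps)
      also have "\<dots> < r - 2 * \<eta>"
        using \<eta>(3) mult_pos_pos[OF \<eta>(1) d] by linarith
      also have "\<dots> \<le> norm ((Y m + Y n) /\<^sub>R 2)"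
        using mid[of m n] N[OF mn(1)] N[OF mn(2)] by linarith
      finally show ?thesis .
    qed
    ultimately have "norm (Y m - Y n) < e / (2 * r) * R" using D mn by blast
    also have "\<dots> \<le> e" using R e r by (simp add: field_simps)
    finally show "dist (Y m) (Y n) < e" by (simp add: dist_norm)
  qed
qed

lemma blinfun_almost_norming:
  fixes c :: "'a::real_normed_vector \<Rightarrow>\<^sub>L real"
  assumes e: "e > 0"
  shows "\<exists>y. norm y \<le> 1 \<and> norm c - e < blinfun_apply c y"
proof (rule ccontr)
  assume "\<not> ?thesis"
  then have H: "\<And>y. norm y \<le> 1 \<Longrightarrow> blinfun_apply c y \<le> norm c - e" by (meson not_le)
  have k: "0 \<le> norm c - e" using H[of 0] by simp
  have "norm c \<le> norm c - e"
  proof (rule norm_blinfun_bound[OF k])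
    fix y :: 'a
    show "norm (blinfun_apply c y) \<le> (norm c - e) * norm y"
    proof (cases "y = 0")
      case False
      define z where "z = (1 / norm y) *\<^sub>R y"
      have "norm z \<le> 1" "norm (-z) \<le> 1" using False by (auto simp: z_def)
      then have "\<bar>blinfun_apply c z\<bar> \<le> norm c - e"
        using H[of z] H[of "-z"] by (auto simp: blinfun.minus_right)
      then show ?thesis
        using False by (simp add: z_def blinfun.scaleR_right abs_mult field_simps)
    qed simp
  qed
  then show False using e by simp
qed

lemma uniformly_convex_norm_attained:
  fixes c :: "'a::banach \<Rightarrow>\<^sub>L real"
  assumes uc: "uniformly_convex_space TYPE('a)" and c: "norm c = 1"
  obtains y where "norm y = 1" "blinfun_apply c y = 1"
proof -
  define \<epsilon> where "\<epsilon> n = inverse (real (Suc n))" for n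
  have "\<exists>y. norm y \<le> 1 \<and> 1 - \<epsilon> n < blinfun_apply c y" for n
    using blinfun_almost_norming[of "\<epsilon> n" c] c by (simp add: \<epsilon>_def)
  then obtain Y where Y1: "\<And>n. norm (Y n) \<le> 1" and Yc: "\<And>n. 1 - \<epsilon> n < blinfun_apply c (Y n)"
    by metis
  have eps: "\<epsilon> \<longlonglongrightarrow> 0" unfolding \<epsilon>_def by (rule LIMSEQ_inverse_real_of_nat)
  have eps_nonneg: "\<epsilon> n \<ge> 0" for n by (simp add: \<epsilon>_def)
  have c_le: "blinfun_apply c z \<le> norm z" for z
    using blinfun_apply_le_norm[of c z] c by simp
  have "Cauchy Y"
  proof (rule uniformly_convex_Cauchy[OF uc _ eps])
    show "norm (Y n) \<le> 1 + \<epsilon> n" for n using Y1[of n] eps_nonneg[of n] by linarith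
    show "1 - (\<epsilon> m + \<epsilon> n) \<le> norm ((Y m + Y n) /\<^sub>R 2)" for m n
    proof -
      have "1 - (\<epsilon> m + \<epsilon> n) \<le> (blinfun_apply c (Y m) + blinfun_apply c (Y n)) / 2"
        using Yc[of m] Yc[of n] eps_nonneg[of m] eps_nonneg[of n] by (simp add: field_simps)
      also have "\<dots> = blinfun_apply c ((Y m + Y n) /\<^sub>R 2)"
        by (simp add: blinfun.scaleR_right blinfun.add_right)
      finally show ?thesis using c_le by (rule order_trans)
    qed
  qed simp
  then obtain y where y: "Y \<longlonglongrightarrow> y" using Cauchy_convergent_iff convergent_def by blast
  have "norm y \<le> 1"
    using tendsto_norm[OF y] Y1 by (intro LIMSEQ_le_const2) auto
  moreover have "1 \<le> blinfun_apply c y"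
  proof (rule LIMSEQ_le[OF _ blinfun.tendsto[OF tendsto_const y]])
    show "(\<lambda>n. 1 - \<epsilon> n) \<longlonglongrightarrow> 1" using tendsto_diff[OF tendsto_const eps] by simp
  qed (use Yc less_imp_le in blast)
  ultimately show ?thesis using c_le[of y] that[of y] by linarith
qed

lemma duality_map_inj:
  assumes uc: "uniformly_convex_space TYPE('a::real_normed_vector)"
    and us: "uniformly_smooth_space TYPE('a)"
  shows "inj (duality_map :: 'a \<Rightarrow> _)"
proof (rule injI)
  fix x y :: 'a assume eq: "duality_map x = duality_map y"
  define r where "r = norm x"
  have ry: "norm y = r"
    using norm_duality_map[OF us, of x] norm_duality_map[OF us, of y] eq by (simp add: r_def)
  have "2 * r^2 = blinfun_apply (duality_map x) (x + y)"
    using duality_map_self[OF us, of x] duality_map_self[OF us, of y] eq ry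
    by (simp add: blinfun.add_right r_def)
  also have "\<dots> \<le> r * norm (x + y)"
    using blinfun_apply_le_norm[of "duality_map x" "x + y"]
    by (simp add: norm_duality_map[OF us] r_def)
  finally have "r \<le> norm ((x + y) /\<^sub>R 2)"
    by (cases "r > 0") (auto simp: power2_eq_square r_def)
  then show "x = y"
    using uniformly_convex_midpoint_eq[OF uc, of x r y] ry by (simp add: r_def)
qed

context
  assumes uc: "uniformly_convex_space TYPE('a::banach)"
    and us: "uniformly_smooth_space TYPE('a)"
begin

lemma duality_map_surj: "surj (duality_map :: 'a \<Rightarrow> _)"
proof -
  have "\<exists>x::'a. duality_map x = c" for c
  proof (cases "c = 0")
    case True
    then show ?thesis using duality_map_zero[OF us] by blast
  next
    case False
    obtain y :: 'a where y: "norm y = 1" "blinfun_apply ((1 / norm c) *\<^sub>R c) y = 1"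
      using uniformly_convex_norm_attained[OF uc, of "(1 / norm c) *\<^sub>R c"] False by auto
    then have cy: "blinfun_apply c y = norm c"
      using False by (simp add: blinfun.scaleR_left field_simps)
    have "duality_map (norm c *\<^sub>R y) = c"
    proof (rule duality_map_eqI[OF us])
      show "(norm (norm c *\<^sub>R y))^2 \<le> blinfun_apply c (norm c *\<^sub>R y)"
        using cy y by (simp add: blinfun.scaleR_right power2_eq_square)
    qed (use y in simp)
    then show ?thesis by blast
  qed
  then show ?thesis unfolding surj_def by metis
qed

lemma bij_duality_map: "bij (duality_map :: 'a \<Rightarrow> _)"
  using duality_map_inj[OF uc us] duality_map_surj by (rule bijI)

lemma duality_map_inv: "duality_map (inv duality_map c :: 'a) = c"
  using bij_duality_map by (simp add: bij_is_surj surj_f_inv_f)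

lemma inv_duality_map_eqI: "duality_map (x::'a) = c \<Longrightarrow> inv duality_map c = x"
  using bij_duality_map by (metis bij_is_inj inv_f_f)

lemma inv_duality_map_scaleR: "(inv duality_map (r *\<^sub>R c) :: 'a) = r *\<^sub>R inv duality_map c"
  by (rule inv_duality_map_eqI) (simp add: duality_map_scaleR[OF us] duality_map_inv)

lemma inv_duality_map_uminus: "(inv duality_map (- c) :: 'a) = - inv duality_map c"
  using inv_duality_map_scaleR[of "-1" c] by simp

lemma norm_inv_duality_map: "norm (inv duality_map c :: 'a) = norm c"
  using norm_duality_map[OF us, of "inv duality_map c"] by (simp add: duality_map_inv)

lemma continuous_on_inv_duality_map: "continuous_on (sphere 0 1) (inv duality_map :: _ \<Rightarrow> 'a)"
  unfolding continuous_on_iff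
proof (intro ballI allI impI)
  fix c and e :: real assume c: "c \<in> sphere (0::'a \<Rightarrow>\<^sub>L real) 1" and e: "e > 0"
  obtain d where d: "d > 0" and D: "\<And>x y::'a. \<And>R. norm x \<le> R \<Longrightarrow> norm y \<le> R \<Longrightarrow>
      (1 - d) * R < norm ((x + y) /\<^sub>R 2) \<Longrightarrow> norm (x - y) < e * R"
    using uniformly_convex_spaceD[OF uc e] by metis
  show "\<exists>d>0. \<forall>c'\<in>sphere 0 1. dist c' c < d \<longrightarrow> dist (inv duality_map c' :: 'a) (inv duality_map c) < e"
  proof (intro exI[of _ "2 * d"] conjI ballI impI)
    fix c' assume c': "c' \<in> sphere (0::'a \<Rightarrow>\<^sub>L real) 1" and dc: "dist c' c < 2 * d"
    define x y :: 'a where "x = inv duality_map c" and "y = inv duality_map c'"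
    have nx: "norm x = 1" "norm y = 1" using c c' by (auto simp: x_def y_def norm_inv_duality_map)
    have cx: "blinfun_apply c x = 1" and cy': "blinfun_apply c' y = 1"
      using duality_map_self[OF us, of x] duality_map_self[OF us, of y] nx
      by (simp_all add: x_def y_def duality_map_inv)
    have "blinfun_apply (c' - c) y \<le> norm (c' - c)"
      using blinfun_apply_le_norm[of "c' - c" y] nx by simp
    moreover have "norm (c' - c) < 2 * d" using dc by (simp add: dist_norm)
    moreover have "blinfun_apply c y = 1 - blinfun_apply (c' - c) y"
      using cy' by (simp add: blinfun.diff_left)
    ultimately have "1 - d < blinfun_apply c ((x + y) /\<^sub>R 2)"
      using cx by (simp add: blinfun.scaleR_right blinfun.add_right)
    also have "\<dots> \<le> norm ((x + y) /\<^sub>R 2)"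
      using blinfun_apply_le_norm[of c "(x + y) /\<^sub>R 2"] c by simp
    finally have "norm (x - y) < e" using D[of x 1 y] nx by simp
    then show "dist (inv duality_map c' :: 'a) (inv duality_map c) < e"
      by (simp add: x_def y_def dist_norm norm_minus_commute)
  qed (use d in simp)
qed

end

section \<open>Nearest points and polar cones\<close>

lemma nearest_point_unique:
  assumes uc: "uniformly_convex_space TYPE('a::real_normed_vector)" and K: "convex K"
    and y1: "y1 \<in> K" "\<forall>z\<in>K. dist (x::'a) y1 \<le> dist x z"
    and y2: "y2 \<in> K" "\<forall>z\<in>K. dist x y2 \<le> dist x z"
  shows "y1 = y2"
proof -
  define r where "r = dist x y1"
  have r2: "dist x y2 = r" using y1 y2 by (simp add: r_def antisym)
  have "(y1 + y2) /\<^sub>R 2 \<in> K"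
    using convexD[OF K y1(1) y2(1), of "1/2" "1/2"] by (simp add: scaleR_right_distrib)
  then have "r \<le> norm (x - (y1 + y2) /\<^sub>R 2)" using y1(2) by (simp add: r_def dist_norm)
  also have "x - (y1 + y2) /\<^sub>R 2 = ((x - y1) + (x - y2)) /\<^sub>R 2"
    by (simp add: algebra_simps flip: scaleR_add_left)
  finally have "x - y1 = x - y2"
    using uniformly_convex_midpoint_eq[OF uc, of "x - y1" r "x - y2"] r2
    by (simp add: r_def dist_norm)
  then show ?thesis by simp
qed

lemma infdist_less_imp_bex:
  assumes "A \<noteq> {}" "infdist x A < r"
  shows "\<exists>a\<in>A. dist x a < r"
proof (rule ccontr)
  assume "\<not> ?thesis"
  then have "r \<le> infdist x A"
    unfolding infdist_notempty[OF assms(1)] using assms(1)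
    by (intro cINF_greatest) (auto simp: not_less)
  then show False using assms(2) by simp
qed

lemma nearest_point_exists:
  assumes uc: "uniformly_convex_space TYPE('a::banach)"
    and K: "convex K" "closed K" "K \<noteq> {}"
  shows "\<exists>y\<in>K. \<forall>z\<in>K. dist (x::'a) y \<le> dist x z"
proof (cases "infdist x K = 0")
  case True
  then have "x \<in> K" using in_closed_iff_infdist_zero[OF K(2,3)] by simp
  then show ?thesis by force
next
  case False
  define d where "d = infdist x K"
  have d: "d > 0" using False infdist_nonneg[of x K] by (simp add: d_def)
  have dle: "d \<le> dist x z" if "z \<in> K" for z using infdist_le[OF that] by (simp add: d_def)
  define \<epsilon> where "\<epsilon> n = inverse (real (Suc n))" for n
  have eps: "\<epsilon> \<longlonglongrightarrow> 0" unfolding \<epsilon>_def by (rule LIMSEQ_inverse_real_of_nat)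
  have eps_nonneg: "\<epsilon> n \<ge> 0" for n by (simp add: \<epsilon>_def)
  have "\<exists>z\<in>K. dist x z < d + \<epsilon> n" for n
    using infdist_less_imp_bex[OF K(3), of x "d + \<epsilon> n"] by (simp add: d_def \<epsilon>_def)
  then obtain Z where Z: "\<And>n. Z n \<in> K" "\<And>n. dist x (Z n) < d + \<epsilon> n" by metis
  have "Cauchy (\<lambda>n. x - Z n)"
  proof (rule uniformly_convex_Cauchy[OF uc d eps])
    show "norm (x - Z n) \<le> d + \<epsilon> n" for n using Z(2)[of n] by (simp add: dist_norm)
    show "d - (\<epsilon> m + \<epsilon> n) \<le> norm ((x - Z m + (x - Z n)) /\<^sub>R 2)" for m n
    proof -
      have "(Z m + Z n) /\<^sub>R 2 \<in> K"
        using convexD[OF K(1) Z(1)[of m] Z(1)[of n], of "1/2" "1/2"]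
        by (simp add: scaleR_right_distrib)
      then have "d \<le> norm (x - (Z m + Z n) /\<^sub>R 2)" using dle by (simp add: dist_norm)
      also have "x - (Z m + Z n) /\<^sub>R 2 = (x - Z m + (x - Z n)) /\<^sub>R 2"
        by (simp add: algebra_simps flip: scaleR_add_left)
      finally show ?thesis using eps_nonneg[of m] eps_nonneg[of n] by linarith
    qed
  qed
  then obtain w where "(\<lambda>n. x - Z n) \<longlonglongrightarrow> w" using Cauchy_convergent_iff convergent_def by blast
  then have y: "Z \<longlonglongrightarrow> x - w" using tendsto_diff[OF tendsto_const[of x]] by fastforce
  define y where "y = x - w"
  have "y \<in> K" using closed_sequentially[OF K(2) _ y] Z(1) by (simp add: y_def)
  moreover have "dist x y \<le> d"
    unfolding y_def
  proof (rule LIMSEQ_le[OF tendsto_dist[OF tendsto_const y]])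
    show "(\<lambda>n. d + \<epsilon> n) \<longlonglongrightarrow> d" using tendsto_add[OF tendsto_const eps] by simp
  qed (use Z(2) less_imp_le in blast)
  ultimately show ?thesis using dle by (meson order_trans)
qed

lemma metric_proj_eq_iff:
  assumes uc: "uniformly_convex_space TYPE('a::banach)"
    and K: "convex K" "closed K" "K \<noteq> {}"
  shows "metric_proj K (x::'a) = y \<longleftrightarrow> y \<in> K \<and> (\<forall>z\<in>K. dist x y \<le> dist x z)"
proof -
  obtain y0 where y0: "y0 \<in> K \<and> (\<forall>z\<in>K. dist x y0 \<le> dist x z)"
    using nearest_point_exists[OF uc K] by blast
  have unique: "\<And>y. y \<in> K \<and> (\<forall>z\<in>K. dist x y \<le> dist x z) \<Longrightarrow> y = y0"
    using nearest_point_unique[OF uc K(1)] y0 by blast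
  have "metric_proj K x = y0"
    unfolding metric_proj_def using y0 unique by (rule the_equality)
  then show ?thesis using y0 unique by blast
qed

text \<open>For a cone, \<open>0\<close> is a nearest point to \<open>x\<close> iff \<open>J x\<close> is nonpositive on the cone: the
  one-sided derivative of the norm at \<open>x\<close> in the direction \<open>-z\<close> is \<open>-\<langle>J x, z\<rangle>/\<parallel>x\<parallel>\<close>.\<close>

lemma cone_nearest_zero_iff_duality_map:
  assumes us: "uniformly_smooth_space TYPE('a::real_normed_vector)" and K: "cone K"
  shows "(\<forall>z\<in>K. norm (x::'a) \<le> norm (x - z)) \<longleftrightarrow> (\<forall>z\<in>K. blinfun_apply (duality_map x) z \<le> 0)"
proof (intro iffI ballI)
  fix z assume H: "\<forall>z\<in>K. norm x \<le> norm (x - z)" and z: "z \<in> K"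
  have "0 \<le> norm_dir_deriv x (-z)"
  proof (rule norm_dir_deriv_greatest)
    fix t :: real assume t: "t > 0"
    have "norm x \<le> norm (x - t *\<^sub>R z)" using H mem_cone[OF K z] t by simp
    then show "0 \<le> norm_diff_quot x (-z) t" using t by (simp add: norm_diff_quot_def)
  qed
  then have "0 \<le> blinfun_apply (duality_map x) (-z)"
    by (simp add: duality_map_apply[OF us])
  then show "blinfun_apply (duality_map x) z \<le> 0" by (simp add: blinfun.minus_right)
next
  fix z assume H: "\<forall>z\<in>K. blinfun_apply (duality_map x) z \<le> 0" and z: "z \<in> K"
  have "(norm x)^2 \<le> blinfun_apply (duality_map x) x - blinfun_apply (duality_map x) z"
    using H z duality_map_self[OF us, of x] by auto
  also have "\<dots> \<le> norm x * norm (x - z)"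
    using blinfun_apply_le_norm[of "duality_map x" "x - z"]
    by (simp add: blinfun.diff_right norm_duality_map[OF us])
  finally show "norm x \<le> norm (x - z)"
    by (cases "x = 0") (simp_all add: power2_eq_square)
qed

lemma polar_cone_eq:
  assumes uc: "uniformly_convex_space TYPE('a::banach)" and us: "uniformly_smooth_space TYPE('a)"
    and K: "convex K" "closed K" "cone K" "K \<noteq> {}"
  shows "polar_cone K = {x::'a. \<forall>z\<in>K. blinfun_apply (duality_map x) z \<le> 0}"
proof -
  have "0 \<in> K" using cone_contains_0 K(3,4) by blast
  then have "x \<in> polar_cone K \<longleftrightarrow> (\<forall>z\<in>K. norm x \<le> norm (x - z))" for x :: 'a
    unfolding polar_cone_def using metric_proj_eq_iff[OF uc K(1,2,4), of x 0]
    by (simp add: dist_norm)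
  then show ?thesis using cone_nearest_zero_iff_duality_map[OF us K(3)] by blast
qed

section \<open>Planes and meridians\<close>

lemma span_pair_iff: "w \<in> span {x, y} \<longleftrightarrow> (\<exists>\<sigma> \<tau>. w = \<sigma> *\<^sub>R x + \<tau> *\<^sub>R (y::'a::real_vector))"
proof
  assume "w \<in> span {x, y}"
  then obtain k k' where "w - k *\<^sub>R x = k' *\<^sub>R y" by (auto simp: span_insert span_singleton)
  then show "\<exists>\<sigma> \<tau>. w = \<sigma> *\<^sub>R x + \<tau> *\<^sub>R y" by (metis diff_add_cancel add.commute)
qed (auto intro: span_add span_scale span_base)

lemma unit_multiple_of_unit: "norm (k *\<^sub>R w) = 1 \<Longrightarrow> norm w = 1 \<Longrightarrow> k = 1 \<or> k = -1"
  by (cases "k \<ge> 0") auto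

lemma unit_pair_coeffs_zero:
  fixes a b :: "'a::real_normed_vector"
  assumes "norm a = 1" "norm b = 1" "b \<noteq> a" "b \<noteq> - a" and eq: "\<alpha> *\<^sub>R a + \<beta> *\<^sub>R b = 0"
  shows "\<alpha> = 0 \<and> \<beta> = 0"
proof (cases "\<beta> = 0")
  case True
  then show ?thesis using eq assms(1) by auto
next
  case False
  define k where "k = - \<alpha> / \<beta>"
  have hb: "\<beta> *\<^sub>R b = - (\<alpha> *\<^sub>R a)" using eq by (simp add: add_eq_0_iff2 add.commute)
  have "b = (1 / \<beta>) *\<^sub>R (\<beta> *\<^sub>R b)" using False by simp
  also have "\<dots> = k *\<^sub>R a" unfolding hb by (simp add: k_def)
  finally have b: "b = k *\<^sub>R a" .
  then have "k = 1 \<or> k = -1" using unit_multiple_of_unit[of k a] assms(1,2) by simp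
  then show ?thesis using b assms(3,4) by auto
qed

lemma unit_pair_independent:
  fixes a b :: "'a::real_normed_vector"
  assumes "norm a = 1" "norm b = 1" "b \<noteq> a" "b \<noteq> - a"
  shows "independent {a, b}"
proof -
  have "a \<notin> span {b}"
  proof
    assume "a \<in> span {b}"
    then obtain k where "a = k *\<^sub>R b" by (auto simp: span_singleton)
    then have "1 *\<^sub>R a + (- k) *\<^sub>R b = 0" by simp
    then show False using unit_pair_coeffs_zero[OF assms, of 1 "- k"] by simp
  qed
  moreover have "b \<noteq> 0" using assms(2) by auto
  ultimately show ?thesis using assms(3) by (simp add: independent_insert)
qed

lemma unit_pair_dim_span:
  fixes a b :: "'a::real_normed_vector"
  assumes "norm a = 1" "norm b = 1" "b \<noteq> a" "b \<noteq> - a"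
  shows "dim (span {a, b}) = 2"
  using unit_pair_independent[OF assms] assms(3) by (simp add: dim_eq_card_independent)

lemma meridian_span_unit_pair:
  fixes a b :: "'a::real_normed_vector"
  assumes "norm a = 1" "norm b = 1" "b \<noteq> a" "b \<noteq> - a"
  shows "meridian (span {a, b} \<inter> sphere 0 1)"
  unfolding meridian_def using unit_pair_dim_span[OF assms] subspace_span by blast

lemma subspace_dim_two_subset_span:
  fixes u v :: "'a::real_vector"
  assumes D: "subspace D" "dim D = 2" and uv: "u \<in> D" "v \<in> D" "independent {u, v}" "u \<noteq> v"
  shows "D \<subseteq> span {u, v}"
proof
  fix w assume w: "w \<in> D"
  obtain B where B: "B \<subseteq> D" "independent B" "D \<subseteq> span B" "card B = dim D"
    using basis_exists[of D] by blast
  have fB: "finite B" "card B = 2" using B(4) D(2) by (simp_all add: card_ge_0_finite)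
  show "w \<in> span {u, v}"
  proof (rule ccontr)
    assume nw: "w \<notin> span {u, v}"
    then have "independent (insert w {u, v})" using uv(3) by (rule independent_insertI)
    moreover have "insert w {u, v} \<subseteq> span B" using w uv(1,2) B(3) by auto
    ultimately have "card (insert w {u, v}) \<le> 2" using independent_span_bound[OF fB(1)] fB(2) by simp
    moreover have "w \<noteq> u" "w \<noteq> v" using nw span_base[of u "{u, v}"] span_base[of v "{u, v}"] by auto
    ultimately show False using uv(4) by simp
  qed
qed

lemma meridian_obtain_unit_pair:
  fixes Ms :: "'a::real_normed_vector set"
  assumes "meridian Ms"
  obtains a b where "norm a = 1" "norm b = 1" "b \<noteq> a" "b \<noteq> - a" "Ms = span {a, b} \<inter> sphere 0 1"
proof -
  obtain D where D: "subspace D" "dim D = 2" "Ms = D \<inter> sphere 0 1"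
    using assms unfolding meridian_def by blast
  obtain B where B: "B \<subseteq> D" "independent B" "D \<subseteq> span B" "card B = dim D"
    using basis_exists[of D] by blast
  obtain e1 e2 where e: "B = {e1, e2}" "e1 \<noteq> e2" using B(4) D(2) card_2_iff by metis
  have ind: "independent {e1, e2}" using B(2) e(1) by simp
  then have nz: "e1 \<noteq> 0" "e2 \<noteq> 0" using dependent_zero by auto
  have "independent {e2, e1}" using ind by (simp add: insert_commute)
  then have e2: "e2 \<notin> span {e1}" using e(2) by (simp add: independent_insert)
  define a b where "a = (1 / norm e1) *\<^sub>R e1" and "b = (1 / norm e2) *\<^sub>R e2"
  have ab: "norm a = 1" "norm b = 1" using nz by (auto simp: a_def b_def)
  have "b \<noteq> k *\<^sub>R a" for k
  proof
    assume "b = k *\<^sub>R a"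
    then have "b \<in> span {e1}" by (simp add: a_def span_base span_scale)
    moreover have "e2 = norm e2 *\<^sub>R b" using nz by (simp add: b_def)
    ultimately show False using e2 span_scale[of b "{e1}" "norm e2"] by simp
  qed
  from this[of 1] this[of "-1"] have ba: "b \<noteq> a" "b \<noteq> - a" by auto
  have aD: "a \<in> D" and bD: "b \<in> D" using B(1) e(1) D(1) by (auto simp: a_def b_def subspace_scale)
  have "D = span {a, b}"
  proof
    show "D \<subseteq> span {a, b}"
      using subspace_dim_two_subset_span[OF D(1,2) aD bD unit_pair_independent[OF ab ba]] ba by auto
    show "span {a, b} \<subseteq> D" using aD bD D(1) by (intro span_minimal) auto
  qed
  then show ?thesis using that ab ba D(3) by blast
qed

lemma in_delta_arcI:
  assumes "norm c = 1" "c = l *\<^sub>R a + m *\<^sub>R b" "l \<ge> 0" "m \<ge> 0"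
  shows "c \<in> delta_arc a b"
proof -
  have "(l, m) \<noteq> (0, 0)" using assms by auto
  then show ?thesis unfolding delta_arc_def using assms by force
qed

lemma sphere_span_pair_cases:
  assumes c: "c \<in> span {a, b}" "norm c = 1"
  shows "c \<in> delta_arc a b \<or> c \<in> delta_arc a (-b) \<or> - c \<in> delta_arc a b \<or> - c \<in> delta_arc a (-b)"
proof -
  obtain \<alpha> \<beta> where ab: "c = \<alpha> *\<^sub>R a + \<beta> *\<^sub>R b" using c(1) span_pair_iff by blast
  have nc: "norm (- c) = 1" using c(2) by simp
  consider "\<alpha> \<ge> 0" "\<beta> \<ge> 0" | "\<alpha> \<ge> 0" "\<beta> < 0" | "\<alpha> < 0" "\<beta> \<ge> 0" | "\<alpha> < 0" "\<beta> < 0"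
    by linarith
  then show ?thesis
  proof cases
    case 1
    then show ?thesis using in_delta_arcI[OF c(2) ab] by simp
  next
    case 2
    have "c = \<alpha> *\<^sub>R a + (-\<beta>) *\<^sub>R (-b)" using ab by simp
    from in_delta_arcI[OF c(2) this] 2 show ?thesis by simp
  next
    case 3
    have "- c = (-\<alpha>) *\<^sub>R a + \<beta> *\<^sub>R (-b)" using ab by simp
    from in_delta_arcI[OF nc this] 3 show ?thesis by simp
  next
    case 4
    have "- c = (-\<alpha>) *\<^sub>R a + (-\<beta>) *\<^sub>R b" using ab by simp
    from in_delta_arcI[OF nc this] 4 show ?thesis by simp
  qed
qed

section \<open>The polar of a single wedge\<close>

lemma arc_image_subset_path_image:
  fixes f g :: "real \<Rightarrow> 'a::t2_space"
  assumes f: "continuous_on {0..1} f" "inj_on f {0..1}"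
    and g: "continuous_on {0..1} g" "g ` {0..1} \<subseteq> f ` {0..1}" "g 0 = f 0" "g 1 = f 1"
  shows "f ` {0..1} \<subseteq> g ` {0..1}"
proof
  fix y assume "y \<in> f ` {0..1}"
  then obtain t where t: "t \<in> {0..1}" "y = f t" by blast
  define h where "h = the_inv_into {0..1} f"
  have hf: "h (f s) = s" if "s \<in> {0..1}" for s
    unfolding h_def using the_inv_into_f_f[OF f(2) that] .
  have "continuous_on (f ` {0..1}) h"
    by (rule continuous_on_inv[OF f(1) compact_Icc]) (use hf in auto)
  then have "continuous_on {0..1} (\<lambda>s. h (g s))"
    by (rule continuous_on_compose2[OF _ g(1) g(2)])
  moreover have "h (g 0) = 0" "h (g 1) = 1" using hf g(3,4) by auto
  ultimately obtain s where s: "s \<in> {0..1}" "h (g s) = t"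
    using IVT'[of "\<lambda>s. h (g s)" 0 t 1] t(1) by auto
  have "g s = f (h (g s))"
    unfolding h_def using g(2) s(1) by (intro f_the_inv_into_f[OF f(2), symmetric]) auto
  then have "g s = y" using s(2) t(2) by simp
  then show "y \<in> g ` {0..1}" using s(1) by blast
qed

lemma abs_blinfun_apply_lt_one:
  assumes us: "uniformly_smooth_space TYPE('a::real_normed_vector)"
    and x: "norm (x::'a) = 1" and c: "norm c = 1" "c \<noteq> duality_map x" "c \<noteq> - duality_map x"
  shows "\<bar>blinfun_apply c x\<bar> < 1"
proof -
  have "\<bar>blinfun_apply c x\<bar> \<le> 1" using norm_blinfun[of c x] x c(1) by simp
  moreover have "blinfun_apply c x \<noteq> 1"
    using duality_map_eqI[OF us, of x c] x c by auto
  moreover have "blinfun_apply c x \<noteq> -1"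
    using duality_map_eqI[OF us, of "-x" c] duality_map_uminus[OF us, of x] x c
    by (auto simp: blinfun.minus_right)
  ultimately show ?thesis by (auto simp: abs_if split: if_splits)
qed

locale wedge_pair =
  fixes a b :: "'a::banach \<Rightarrow>\<^sub>L real"
  assumes uc: "uniformly_convex_space TYPE('a)" and us: "uniformly_smooth_space TYPE('a)"
    and norm_a: "norm a = 1" and norm_b: "norm b = 1" and b_ne_a: "b \<noteq> a" and b_ne_neg_a: "b \<noteq> - a"
begin

definition u :: 'a where "u = inv duality_map a"
definition v :: 'a where "v = inv duality_map b"

lemma duality_map_u: "duality_map u = a" and duality_map_v: "duality_map v = b"
  unfolding u_def v_def by (simp_all add: duality_map_inv[OF uc us])

lemma norm_u: "norm u = 1" and norm_v: "norm v = 1"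
  unfolding u_def v_def by (simp_all add: norm_inv_duality_map[OF uc us] norm_a norm_b)

lemma a_u: "blinfun_apply a u = 1" and b_v: "blinfun_apply b v = 1"
  using duality_map_self[OF us, of u] duality_map_self[OF us, of v]
  by (simp_all add: duality_map_u duality_map_v norm_u norm_v)

lemma v_ne_u: "v \<noteq> u" and v_ne_neg_u: "v \<noteq> - u"
  using duality_map_u duality_map_v duality_map_uminus[OF us, of u] b_ne_a b_ne_neg_a by auto

definition det :: real where "det = 1 - blinfun_apply a v * blinfun_apply b u"

lemma det_pos: "det > 0"
proof -
  have "a \<noteq> - b" using b_ne_neg_a by auto
  then have "\<bar>blinfun_apply a v\<bar> < 1"
    using abs_blinfun_apply_lt_one[OF us norm_v norm_a] b_ne_a by (auto simp: duality_map_v)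
  moreover have "\<bar>blinfun_apply b u\<bar> < 1"
    using abs_blinfun_apply_lt_one[OF us norm_u norm_b] b_ne_a b_ne_neg_a
    by (auto simp: duality_map_u)
  ultimately have "\<bar>blinfun_apply a v\<bar> * \<bar>blinfun_apply b u\<bar> < 1 * 1"
    by (rule abs_mult_less)
  then have "\<bar>blinfun_apply a v * blinfun_apply b u\<bar> < 1" by (simp add: abs_mult)
  then show ?thesis by (simp add: det_def abs_less_iff)
qed

text \<open>The Gram matrix of \<open>(a, b)\<close> against \<open>(u, v)\<close> is \<open>[[1, a v], [b u, 1]]\<close> with determinant
  \<open>det\<close>; inverting it gives the basis of \<open>span {u, v}\<close> dual to \<open>(a, b)\<close> and the coordinate
  functionals of \<open>span {u, v}\<close>.\<close>

definition e_a :: 'a where "e_a = (1 / det) *\<^sub>R (u - blinfun_apply b u *\<^sub>R v)"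
definition e_b :: 'a where "e_b = (1 / det) *\<^sub>R (v - blinfun_apply a v *\<^sub>R u)"

lemma a_e_a: "blinfun_apply a e_a = 1" and b_e_a: "blinfun_apply b e_a = 0"
  and a_e_b: "blinfun_apply a e_b = 0" and b_e_b: "blinfun_apply b e_b = 1"
  using det_pos a_u b_v
  by (simp_all add: e_a_def e_b_def blinfun.scaleR_right blinfun.diff_right det_def field_simps)

definition coord_u :: "'a \<Rightarrow> real" where
  "coord_u w = (blinfun_apply a w - blinfun_apply a v * blinfun_apply b w) / det"
definition coord_v :: "'a \<Rightarrow> real" where
  "coord_v w = (blinfun_apply b w - blinfun_apply b u * blinfun_apply a w) / det"

lemma coord_u_comb: "coord_u (\<sigma> *\<^sub>R u + \<tau> *\<^sub>R v) = \<sigma>"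
  and coord_v_comb: "coord_v (\<sigma> *\<^sub>R u + \<tau> *\<^sub>R v) = \<tau>"
  using det_pos a_u b_v
  by (simp_all add: coord_u_def coord_v_def det_def blinfun.add_right blinfun.scaleR_right field_simps)

lemma coord_u_u: "coord_u u = 1" and coord_v_u: "coord_v u = 0"
  and coord_u_v: "coord_u v = 0" and coord_v_v: "coord_v v = 1"
  using coord_u_comb[of 1 0] coord_v_comb[of 1 0] coord_u_comb[of 0 1] coord_v_comb[of 0 1] by simp_all

lemma span_uv_coords: "w \<in> span {u, v} \<Longrightarrow> w = coord_u w *\<^sub>R u + coord_v w *\<^sub>R v"
  by (auto simp: span_pair_iff coord_u_comb coord_v_comb)

lemma continuous_on_coords:
  assumes "continuous_on S f"
  shows "continuous_on S (\<lambda>t. coord_u (f t))" "continuous_on S (\<lambda>t. coord_v (f t))"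
  unfolding coord_u_def coord_v_def using det_pos assms
  by (auto intro!: continuous_intros bounded_linear.continuous_on[OF blinfun.bounded_linear_right])

lemma wedge_eq: "wedge a b = {z. blinfun_apply a z \<le> 0 \<and> blinfun_apply b z \<le> 0}"
proof -
  have "a \<in> delta_arc a b" "b \<in> delta_arc a b"
    using in_delta_arcI[of a 1 a 0 b] in_delta_arcI[of b 0 a 1 b] norm_a norm_b by simp_all
  moreover have "blinfun_apply c z \<le> 0"
    if c: "c \<in> delta_arc a b" and z: "blinfun_apply a z \<le> 0" "blinfun_apply b z \<le> 0" for c z
  proof -
    obtain l m where "c = (1 / norm (l *\<^sub>R a + m *\<^sub>R b)) *\<^sub>R (l *\<^sub>R a + m *\<^sub>R b)" "l \<ge> 0" "m \<ge> 0"
      using c unfolding delta_arc_def by blast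
    with z show ?thesis
      by (simp add: blinfun.scaleR_left blinfun.add_left mult_nonneg_nonpos add_nonpos_nonpos
          divide_nonpos_nonneg)
  qed
  ultimately show ?thesis unfolding wedge_def by blast
qed

lemma closed_wedge: "closed (wedge a b)"
  unfolding wedge_eq Collect_conj_eq
  by (intro closed_Int closed_Collect_le continuous_on_const
      linear_continuous_on blinfun.bounded_linear_right)

lemma convex_wedge: "convex (wedge a b)"
  unfolding wedge_eq convex_def
  by (auto simp: blinfun.add_right blinfun.scaleR_right add_nonpos_nonpos mult_nonneg_nonpos)

lemma cone_wedge: "cone (wedge a b)"
  unfolding wedge_eq cone_def by (auto simp: blinfun.scaleR_right mult_nonneg_nonpos)

definition ab_cone :: "('a \<Rightarrow>\<^sub>L real) set" where
  "ab_cone = {l *\<^sub>R a + m *\<^sub>R b | l m. l \<ge> 0 \<and> m \<ge> 0}"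

text \<open>Farkas' lemma for two functionals; \<open>c\<close> is recovered as \<open>c(e\<^sub>a) a + c(e\<^sub>b) b\<close>.\<close>

lemma nonpos_on_wedge_iff: "(\<forall>z\<in>wedge a b. blinfun_apply c z \<le> 0) \<longleftrightarrow> c \<in> ab_cone"
proof
  assume H: "\<forall>z\<in>wedge a b. blinfun_apply c z \<le> 0"
  have c0: "blinfun_apply c z = 0" if "blinfun_apply a z = 0" "blinfun_apply b z = 0" for z
  proof -
    have "z \<in> wedge a b" "- z \<in> wedge a b" using that
      by (simp_all add: wedge_eq blinfun.minus_right)
    then have "blinfun_apply c z \<le> 0" "blinfun_apply c (- z) \<le> 0" using H by blast+
    then show ?thesis by (simp add: blinfun.minus_right)
  qed
  have "c = blinfun_apply c e_a *\<^sub>R a + blinfun_apply c e_b *\<^sub>R b"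
  proof (rule blinfun_eqI)
    fix z
    define z' where "z' = z - blinfun_apply a z *\<^sub>R e_a - blinfun_apply b z *\<^sub>R e_b"
    have "blinfun_apply c z' = 0"
      using a_e_a b_e_a a_e_b b_e_b
      by (intro c0) (simp_all add: z'_def blinfun.diff_right blinfun.scaleR_right)
    then show "blinfun_apply c z = blinfun_apply (blinfun_apply c e_a *\<^sub>R a + blinfun_apply c e_b *\<^sub>R b) z"
      by (simp add: z'_def blinfun.diff_right blinfun.add_right blinfun.scaleR_right blinfun.add_left
          blinfun.scaleR_left algebra_simps)
  qed
  moreover have "- e_a \<in> wedge a b" "- e_b \<in> wedge a b"
    using a_e_a b_e_a a_e_b b_e_b by (simp_all add: wedge_eq blinfun.minus_right)
  then have "blinfun_apply c e_a \<ge> 0" "blinfun_apply c e_b \<ge> 0"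
    using H by (auto simp: blinfun.minus_right)
  ultimately show "c \<in> ab_cone" unfolding ab_cone_def by blast
next
  assume "c \<in> ab_cone"
  then show "\<forall>z\<in>wedge a b. blinfun_apply c z \<le> 0"
    by (auto simp: ab_cone_def wedge_eq blinfun.add_left blinfun.scaleR_left
        add_nonpos_nonpos mult_nonneg_nonpos)
qed

lemma polar_wedge_eq: "polar_cone (wedge a b) = {x. duality_map x \<in> ab_cone}"
proof -
  have "0 \<in> wedge a b" by (simp add: wedge_eq)
  then show ?thesis
    using polar_cone_eq[OF uc us convex_wedge closed_wedge cone_wedge] nonpos_on_wedge_iff by blast
qed


lemma ab_coeffs_eq: "\<alpha> *\<^sub>R a + \<beta> *\<^sub>R b = \<alpha>' *\<^sub>R a + \<beta>' *\<^sub>R b \<Longrightarrow> \<alpha> = \<alpha>' \<and> \<beta> = \<beta>'"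
  using unit_pair_coeffs_zero[OF norm_a norm_b b_ne_a b_ne_neg_a, of "\<alpha> - \<alpha>'" "\<beta> - \<beta>'"]
  by (simp add: algebra_simps)

definition arc :: "real \<Rightarrow> ('a \<Rightarrow>\<^sub>L real)" where
  "arc t = (1 / norm ((1 - t) *\<^sub>R a + t *\<^sub>R b)) *\<^sub>R ((1 - t) *\<^sub>R a + t *\<^sub>R b)"

lemma arc_denom_pos: "norm ((1 - t) *\<^sub>R a + t *\<^sub>R b) > 0"
  using unit_pair_coeffs_zero[OF norm_a norm_b b_ne_a b_ne_neg_a, of "1 - t" t] by auto

lemma arc_coeffs:
  "arc t = ((1 - t) / norm ((1 - t) *\<^sub>R a + t *\<^sub>R b)) *\<^sub>R a + (t / norm ((1 - t) *\<^sub>R a + t *\<^sub>R b)) *\<^sub>R b"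
  by (simp add: arc_def scaleR_right_distrib)

lemma norm_arc: "norm (arc t) = 1"
  using arc_denom_pos[of t] by (simp add: arc_def)

lemma arc_0: "arc 0 = a" and arc_1: "arc 1 = b"
  by (simp_all add: arc_def norm_a norm_b)

lemma delta_arc_eq: "delta_arc a b = arc ` {0..1}"
proof
  show "delta_arc a b \<subseteq> arc ` {0..1}"
  proof
    fix c assume "c \<in> delta_arc a b"
    then obtain l m where c: "c = (1 / norm (l *\<^sub>R a + m *\<^sub>R b)) *\<^sub>R (l *\<^sub>R a + m *\<^sub>R b)"
      and lm: "l \<ge> 0" "m \<ge> 0" "(l, m) \<noteq> (0, 0)" unfolding delta_arc_def by blast
    define s where "s = l + m"
    have s: "s > 0" using lm by (auto simp: s_def)
    have "(1 - m / s) *\<^sub>R a + (m / s) *\<^sub>R b = (1 / s) *\<^sub>R (l *\<^sub>R a + m *\<^sub>R b)"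
      using s by (simp add: s_def field_simps scaleR_right_distrib)
    then have "arc (m / s) = c" using s by (simp add: arc_def c)
    moreover have "m / s \<in> {0..1}" using lm s by (auto simp: s_def field_simps)
    ultimately show "c \<in> arc ` {0..1}" by blast
  qed
  show "arc ` {0..1} \<subseteq> delta_arc a b"
    unfolding delta_arc_def arc_def by (force intro: exI[of _ "1 - _"])
qed

lemma arc_in_ab_cone: "t \<in> {0..1} \<Longrightarrow> arc t \<in> ab_cone"
  unfolding arc_coeffs ab_cone_def using arc_denom_pos[of t] by force

lemma continuous_on_arc: "continuous_on {0..1} arc"
  unfolding arc_def using arc_denom_pos by (intro continuous_intros) auto

lemma inj_on_arc: "inj_on arc {0..1}"
proof (rule inj_onI)
  fix s t assume "s \<in> {0..1}" "t \<in> {0..1}" "arc s = arc t"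
  define Ns Nt where "Ns = norm ((1 - s) *\<^sub>R a + s *\<^sub>R b)" and "Nt = norm ((1 - t) *\<^sub>R a + t *\<^sub>R b)"
  have N: "Ns > 0" "Nt > 0" using arc_denom_pos by (auto simp: Ns_def Nt_def)
  have "(1 - s) / Ns = (1 - t) / Nt" "s / Ns = t / Nt"
    using ab_coeffs_eq \<open>arc s = arc t\<close> unfolding arc_coeffs Ns_def[symmetric] Nt_def[symmetric] by blast+
  then have "(1 - s) / Ns + s / Ns = (1 - t) / Nt + t / Nt" by simp
  then have "Ns = Nt" by (simp add: add_divide_distrib[symmetric])
  then show "s = t" using \<open>s / Ns = t / Nt\<close> N by simp
qed

lemma arc_ne_uminus:
  assumes t: "t \<in> {0..1}"
  shows "arc t \<noteq> - a" "arc t \<noteq> - b"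
proof -
  define N where "N = norm ((1 - t) *\<^sub>R a + t *\<^sub>R b)"
  have N: "N > 0" using arc_denom_pos by (simp add: N_def)
  have arc: "arc t = ((1 - t) / N) *\<^sub>R a + (t / N) *\<^sub>R b" unfolding arc_coeffs N_def ..
  have "(1 - t) / N \<ge> 0" "t / N \<ge> 0" using t N by auto
  then show "arc t \<noteq> - a" "arc t \<noteq> - b"
    using ab_coeffs_eq[of "(1 - t) / N" "t / N" "-1" 0] ab_coeffs_eq[of "(1 - t) / N" "t / N" 0 "-1"]
    unfolding arc by auto
qed

definition inv_arc :: "real \<Rightarrow> 'a" where "inv_arc t = inv duality_map (arc t)"

lemma duality_map_inv_arc: "duality_map (inv_arc t) = arc t"
  unfolding inv_arc_def by (rule duality_map_inv[OF uc us])

lemma norm_inv_arc: "norm (inv_arc t) = 1"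
  unfolding inv_arc_def by (simp add: norm_inv_duality_map[OF uc us] norm_arc)

lemma inv_arc_0: "inv_arc 0 = u" and inv_arc_1: "inv_arc 1 = v"
  unfolding inv_arc_def u_def v_def arc_0 arc_1 by simp_all

lemma continuous_on_inv_arc: "continuous_on {0..1} inv_arc"
  unfolding inv_arc_def
  by (rule continuous_on_compose2[OF continuous_on_inv_duality_map[OF uc us] continuous_on_arc])
    (auto simp: norm_arc)

lemma inj_on_inv_arc: "inj_on inv_arc {0..1}"
  using inj_on_arc duality_map_inv_arc by (metis inj_on_def)

lemma inv_arc_ne_uminus:
  assumes "t \<in> {0..1}"
  shows "inv_arc t \<noteq> - u" "inv_arc t \<noteq> - v"
  using arc_ne_uminus[OF assms] duality_map_inv_arc[of t]
    duality_map_uminus[OF us, of u] duality_map_uminus[OF us, of v]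
  by (auto simp: duality_map_u duality_map_v)

lemma inv_duality_map_delta_arc: "inv duality_map ` delta_arc a b = inv_arc ` {0..1}"
  unfolding delta_arc_eq image_image inv_arc_def ..

lemma polar_wedge_eq_rays:
  "{x. duality_map x \<in> ab_cone} = {r *\<^sub>R inv_arc t | r t. r \<ge> 0 \<and> t \<in> {0..1}}"
proof (intro equalityI subsetI)
  fix x assume "x \<in> {x. duality_map x \<in> ab_cone}"
  then obtain l m where lm: "duality_map x = l *\<^sub>R a + m *\<^sub>R b" "l \<ge> 0" "m \<ge> 0"
    unfolding ab_cone_def by blast
  show "x \<in> {r *\<^sub>R inv_arc t | r t. r \<ge> 0 \<and> t \<in> {0..1}}"
  proof (cases "x = 0")
    case False
    have nd: "norm (duality_map x) = norm x" by (rule norm_duality_map[OF us])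
    have "norm ((1 / norm x) *\<^sub>R duality_map x) = 1" using False nd by simp
    moreover have "(1 / norm x) *\<^sub>R duality_map x = (l / norm x) *\<^sub>R a + (m / norm x) *\<^sub>R b"
      using lm(1) by (simp add: scaleR_right_distrib)
    ultimately have "(1 / norm x) *\<^sub>R duality_map x \<in> delta_arc a b"
      by (rule in_delta_arcI) (use lm(2,3) in simp_all)
    then obtain t where t: "t \<in> {0..1}" "arc t = (1 / norm x) *\<^sub>R duality_map x"
      unfolding delta_arc_eq by auto
    then have "duality_map x = norm x *\<^sub>R arc t" using False by simp
    then have "x = inv duality_map (norm x *\<^sub>R arc t)"
      by (rule inv_duality_map_eqI[OF uc us, symmetric])
    also have "\<dots> = norm x *\<^sub>R inv_arc t" by (simp add: inv_arc_def inv_duality_map_scaleR[OF uc us])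
    finally have "x = norm x *\<^sub>R inv_arc t" .
    then show ?thesis using t(1) by (intro CollectI exI[of _ "norm x"] exI[of _ t]) auto
  qed (intro CollectI exI[of _ 0] exI[of _ 0]; simp)
next
  fix x assume "x \<in> {r *\<^sub>R inv_arc t | r t. r \<ge> 0 \<and> t \<in> {0..1}}"
  then obtain r t where x: "x = r *\<^sub>R inv_arc t" "r \<ge> 0" "t \<in> {0..1}" by blast
  obtain l m where "arc t = l *\<^sub>R a + m *\<^sub>R b" "l \<ge> 0" "m \<ge> 0"
    using arc_in_ab_cone[OF x(3)] unfolding ab_cone_def by blast
  then show "x \<in> {x. duality_map x \<in> ab_cone}"
    unfolding ab_cone_def using x(2)
    by (intro CollectI exI[of _ "r * l"] exI[of _ "r * m"])
      (simp add: x(1) duality_map_scaleR[OF us] duality_map_inv_arc scaleR_right_distrib)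
qed


lemma uv_comb_nonzero: "(1 - s) *\<^sub>R u + s *\<^sub>R v \<noteq> 0"
  using unit_pair_coeffs_zero[OF norm_u norm_v v_ne_u v_ne_neg_u, of "1 - s" s] by auto

text \<open>If the polar is convex it contains the segment from \<open>u\<close> to \<open>v\<close>; normalising that segment
  gives a path from \<open>u\<close> to \<open>v\<close> inside the simple arc \<open>J\<^sup>-\<^sup>1 \<circ> arc\<close>, which therefore lies
  in the plane of \<open>u\<close> and \<open>v\<close>.\<close>

lemma inv_arc_in_span_if_convex:
  assumes cv: "convex {x. duality_map x \<in> ab_cone}" and t: "t \<in> {0..1}"
  shows "inv_arc t \<in> span {u, v}"
proof -
  define g where "g s = (1 / norm ((1 - s) *\<^sub>R u + s *\<^sub>R v)) *\<^sub>R ((1 - s) *\<^sub>R u + s *\<^sub>R v)" for s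
  have "a \<in> ab_cone" "b \<in> ab_cone"
    using arc_in_ab_cone[of 0] arc_in_ab_cone[of 1] by (simp_all add: arc_0 arc_1)
  then have uv: "u \<in> {x. duality_map x \<in> ab_cone}" "v \<in> {x. duality_map x \<in> ab_cone}"
    by (simp_all add: duality_map_u duality_map_v)
  have "g s \<in> inv_arc ` {0..1}" if s: "s \<in> {0..1}" for s
  proof -
    have "(1 - s) *\<^sub>R u + s *\<^sub>R v \<in> {x. duality_map x \<in> ab_cone}"
      using s by (intro convexD[OF cv uv]) auto
    then obtain r t' where rt: "(1 - s) *\<^sub>R u + s *\<^sub>R v = r *\<^sub>R inv_arc t'" "r \<ge> 0" "t' \<in> {0..1}"
      unfolding polar_wedge_eq_rays by blast
    have r: "norm ((1 - s) *\<^sub>R u + s *\<^sub>R v) = r"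
      using arg_cong[OF rt(1), of norm] rt(2) by (simp add: norm_inv_arc)
    have "r \<noteq> 0" using uv_comb_nonzero[of s] rt(1) by auto
    have "g s = (1 / r) *\<^sub>R ((1 - s) *\<^sub>R u + s *\<^sub>R v)" by (simp only: g_def r)
    also have "\<dots> = (1 / r) *\<^sub>R (r *\<^sub>R inv_arc t')" by (simp only: rt(1))
    also have "\<dots> = inv_arc t'" using \<open>r \<noteq> 0\<close> by simp
    finally show ?thesis using rt(3) by blast
  qed
  moreover have "continuous_on {0..1} g"
    unfolding g_def using uv_comb_nonzero by (intro continuous_intros) auto
  moreover have "g 0 = inv_arc 0" "g 1 = inv_arc 1"
    by (simp_all add: g_def norm_u norm_v inv_arc_0 inv_arc_1)
  ultimately have sub: "inv_arc ` {0..1} \<subseteq> g ` {0..1}"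
    using arc_image_subset_path_image[OF continuous_on_inv_arc inj_on_inv_arc, of g]
    by (simp add: image_subset_iff)
  have g_span: "g s \<in> span {u, v}" for s
    unfolding g_def using span_base[of u "{u, v}"] span_base[of v "{u, v}"]
    by (simp add: span_scale span_add)
  obtain s where "inv_arc t = g s" using subsetD[OF sub imageI[OF t]] by blast
  then show ?thesis using g_span by simp
qed

context
  assumes in_span: "\<forall>t\<in>{0..1}. inv_arc t \<in> span {u, v}"
begin

lemma inv_arc_coords: "t \<in> {0..1} \<Longrightarrow> inv_arc t = coord_u (inv_arc t) *\<^sub>R u + coord_v (inv_arc t) *\<^sub>R v"
  using in_span span_uv_coords by blast

text \<open>A coordinate changing sign would force the curve through \<open>\<plusminus>u\<close> or \<open>\<plusminus>v\<close> in between;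
  this contradicts injectivity and the exclusion of \<open>-u\<close> and \<open>-v\<close>.\<close>

lemma coord_u_inv_arc_nonneg: "t \<in> {0..1} \<Longrightarrow> coord_u (inv_arc t) \<ge> 0"
proof (rule ccontr)
  assume t: "t \<in> {0..1}" and neg: "\<not> coord_u (inv_arc t) \<ge> 0"
  have "continuous_on {0..t} (\<lambda>s. coord_u (inv_arc s))"
    using continuous_on_coords(1)[OF continuous_on_subset[OF continuous_on_inv_arc]] t by auto
  then obtain t1 where t1: "0 \<le> t1" "t1 \<le> t" "coord_u (inv_arc t1) = 0"
    using IVT2'[of "\<lambda>s. coord_u (inv_arc s)" t 0 0] neg t by (auto simp: inv_arc_0 coord_u_u)
  then have t1I: "t1 \<in> {0..1}" using t by auto
  have e: "inv_arc t1 = coord_v (inv_arc t1) *\<^sub>R v" using inv_arc_coords[OF t1I] t1(3) by simp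
  then have "coord_v (inv_arc t1) = 1 \<or> coord_v (inv_arc t1) = -1"
    using norm_inv_arc[of t1] norm_v unit_multiple_of_unit by metis
  then have "inv_arc t1 = inv_arc 1" using e inv_arc_ne_uminus[OF t1I] inv_arc_1 by auto
  then have "t1 = 1" using inj_onD[OF inj_on_inv_arc] t1I by auto
  then show False using t1 t neg by (simp add: inv_arc_1 coord_u_v)
qed

lemma coord_v_inv_arc_nonneg: "t \<in> {0..1} \<Longrightarrow> coord_v (inv_arc t) \<ge> 0"
proof (rule ccontr)
  assume t: "t \<in> {0..1}" and neg: "\<not> coord_v (inv_arc t) \<ge> 0"
  have "continuous_on {t..1} (\<lambda>s. coord_v (inv_arc s))"
    using continuous_on_coords(2)[OF continuous_on_subset[OF continuous_on_inv_arc]] t by auto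
  then obtain t1 where t1: "t \<le> t1" "t1 \<le> 1" "coord_v (inv_arc t1) = 0"
    using IVT'[of "\<lambda>s. coord_v (inv_arc s)" t 0 1] neg t by (auto simp: inv_arc_1 coord_v_v)
  then have t1I: "t1 \<in> {0..1}" using t by auto
  have e: "inv_arc t1 = coord_u (inv_arc t1) *\<^sub>R u" using inv_arc_coords[OF t1I] t1(3) by simp
  then have "coord_u (inv_arc t1) = 1 \<or> coord_u (inv_arc t1) = -1"
    using norm_inv_arc[of t1] norm_u unit_multiple_of_unit by metis
  then have "inv_arc t1 = inv_arc 0" using e inv_arc_ne_uminus[OF t1I] inv_arc_0 by auto
  then have "t1 = 0" using inj_onD[OF inj_on_inv_arc] t1I by auto
  then show False using t1 t neg by (simp add: inv_arc_0 coord_v_u)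
qed

text \<open>The ray through \<open>\<alpha> u + \<beta> v\<close> is hit by the curve where the continuous function
  \<open>\<beta> coord\<^sub>u - \<alpha> coord\<^sub>v\<close> changes sign.\<close>

lemma duality_map_cone_uv_in_ab_cone:
  assumes "\<alpha> \<ge> 0" "\<beta> \<ge> 0"
  shows "duality_map (\<alpha> *\<^sub>R u + \<beta> *\<^sub>R v) \<in> ab_cone"
proof -
  define h where "h t = \<beta> * coord_u (inv_arc t) - \<alpha> * coord_v (inv_arc t)" for t
  have "continuous_on {0..1} h"
    unfolding h_def by (intro continuous_intros continuous_on_coords continuous_on_inv_arc)
  then obtain t where t: "t \<in> {0..1}" "h t = 0"
    using IVT2'[of h 1 0 0] assms
    by (auto simp: h_def inv_arc_0 inv_arc_1 coord_u_u coord_u_v coord_v_u coord_v_v)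
  define \<sigma> \<tau> where "\<sigma> = coord_u (inv_arc t)" and "\<tau> = coord_v (inv_arc t)"
  have st: "\<sigma> \<ge> 0" "\<tau> \<ge> 0"
    using coord_u_inv_arc_nonneg[OF t(1)] coord_v_inv_arc_nonneg[OF t(1)]
    by (simp_all add: \<sigma>_def \<tau>_def)
  have w: "inv_arc t = \<sigma> *\<^sub>R u + \<tau> *\<^sub>R v" using inv_arc_coords[OF t(1)] by (simp add: \<sigma>_def \<tau>_def)
  have "\<sigma> + \<tau> > 0"
  proof (rule ccontr)
    assume "\<not> \<sigma> + \<tau> > 0"
    then have "\<sigma> = 0" "\<tau> = 0" using st by linarith+
    then have "inv_arc t = 0" using w by simp
    then show False using norm_inv_arc[of t] by simp
  qed
  moreover have "\<beta> * \<sigma> = \<alpha> * \<tau>" using t(2) by (simp add: h_def \<sigma>_def \<tau>_def)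
  ultimately have "((\<alpha> + \<beta>) / (\<sigma> + \<tau>)) * \<sigma> = \<alpha>" "((\<alpha> + \<beta>) / (\<sigma> + \<tau>)) * \<tau> = \<beta>"
    by (simp_all add: field_simps algebra_simps)
  then have "\<alpha> *\<^sub>R u + \<beta> *\<^sub>R v = ((\<alpha> + \<beta>) / (\<sigma> + \<tau>)) *\<^sub>R inv_arc t"
    unfolding w by (simp add: scaleR_right_distrib)
  moreover have "(\<alpha> + \<beta>) / (\<sigma> + \<tau>) \<ge> 0" using assms st by simp
  ultimately have "\<alpha> *\<^sub>R u + \<beta> *\<^sub>R v \<in> {x. duality_map x \<in> ab_cone}"
    unfolding polar_wedge_eq_rays using t(1) by blast
  then show ?thesis by simp
qed

lemma polar_wedge_eq_cone_uv:
  "{x. duality_map x \<in> ab_cone} = {\<alpha> *\<^sub>R u + \<beta> *\<^sub>R v | \<alpha> \<beta>. \<alpha> \<ge> 0 \<and> \<beta> \<ge> 0}"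
proof (intro equalityI subsetI)
  fix x assume "x \<in> {x. duality_map x \<in> ab_cone}"
  then obtain r t where x: "x = r *\<^sub>R inv_arc t" "r \<ge> 0" "t \<in> {0..1}"
    unfolding polar_wedge_eq_rays by blast
  define \<sigma> \<tau> where "\<sigma> = coord_u (inv_arc t)" and "\<tau> = coord_v (inv_arc t)"
  have "inv_arc t = \<sigma> *\<^sub>R u + \<tau> *\<^sub>R v"
    using inv_arc_coords[OF x(3)] by (simp add: \<sigma>_def \<tau>_def)
  then have "x = r *\<^sub>R (\<sigma> *\<^sub>R u + \<tau> *\<^sub>R v)" using x(1) by simp
  then have "x = (r * \<sigma>) *\<^sub>R u + (r * \<tau>) *\<^sub>R v" by (simp add: scaleR_right_distrib)
  moreover have "r * \<sigma> \<ge> 0" "r * \<tau> \<ge> 0"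
    using x(2) coord_u_inv_arc_nonneg[OF x(3)] coord_v_inv_arc_nonneg[OF x(3)]
    by (simp_all add: \<sigma>_def \<tau>_def)
  ultimately show "x \<in> {\<alpha> *\<^sub>R u + \<beta> *\<^sub>R v | \<alpha> \<beta>. \<alpha> \<ge> 0 \<and> \<beta> \<ge> 0}" by blast
qed (auto intro: duality_map_cone_uv_in_ab_cone)

lemma convex_polar_wedge_if_in_span: "convex {x. duality_map x \<in> ab_cone}"
  unfolding polar_wedge_eq_cone_uv convex_def
proof clarify
  fix s t \<alpha>1 \<beta>1 \<alpha>2 \<beta>2 :: real
  assume h: "0 \<le> s" "0 \<le> t" "s + t = 1" "0 \<le> \<alpha>1" "0 \<le> \<beta>1" "0 \<le> \<alpha>2" "0 \<le> \<beta>2"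
  have "s *\<^sub>R (\<alpha>1 *\<^sub>R u + \<beta>1 *\<^sub>R v) + t *\<^sub>R (\<alpha>2 *\<^sub>R u + \<beta>2 *\<^sub>R v) =
        (s * \<alpha>1 + t * \<alpha>2) *\<^sub>R u + (s * \<beta>1 + t * \<beta>2) *\<^sub>R v"
    by (simp add: algebra_simps)
  moreover have "s * \<alpha>1 + t * \<alpha>2 \<ge> 0" "s * \<beta>1 + t * \<beta>2 \<ge> 0" using h by simp_all
  ultimately show "\<exists>\<alpha> \<beta>. s *\<^sub>R (\<alpha>1 *\<^sub>R u + \<beta>1 *\<^sub>R v) + t *\<^sub>R (\<alpha>2 *\<^sub>R u + \<beta>2 *\<^sub>R v)
      = \<alpha> *\<^sub>R u + \<beta> *\<^sub>R v \<and> 0 \<le> \<alpha> \<and> 0 \<le> \<beta>"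
    by blast
qed

end

lemma convex_polar_wedge_iff_in_span:
  "convex (polar_cone (wedge a b)) \<longleftrightarrow> (\<forall>t\<in>{0..1}. inv_arc t \<in> span {u, v})"
  using inv_arc_in_span_if_convex convex_polar_wedge_if_in_span polar_wedge_eq by auto

lemma inv_arc_in_meridian_iff_in_span:
  "(\<exists>M. meridian M \<and> inv_arc ` {0..1} \<subseteq> M) \<longleftrightarrow> (\<forall>t\<in>{0..1}. inv_arc t \<in> span {u, v})"
proof
  assume "\<exists>M. meridian M \<and> inv_arc ` {0..1} \<subseteq> M"
  then obtain D where D: "subspace D" "dim D = 2" "inv_arc ` {0..1} \<subseteq> D"
    unfolding meridian_def by blast
  have "inv_arc 0 \<in> D" "inv_arc 1 \<in> D" using D(3) by auto
  then have "u \<in> D" "v \<in> D" by (simp_all add: inv_arc_0 inv_arc_1)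
  then have "D \<subseteq> span {u, v}"
    using subspace_dim_two_subset_span[OF D(1,2) _ _ _ v_ne_u[symmetric]]
      unit_pair_independent[OF norm_u norm_v v_ne_u v_ne_neg_u] by blast
  then show "\<forall>t\<in>{0..1}. inv_arc t \<in> span {u, v}" using D(3) by blast
next
  assume "\<forall>t\<in>{0..1}. inv_arc t \<in> span {u, v}"
  then have "inv_arc ` {0..1} \<subseteq> span {u, v} \<inter> sphere 0 1" by (auto simp: norm_inv_arc)
  then show "\<exists>M. meridian M \<and> inv_arc ` {0..1} \<subseteq> M"
    using meridian_span_unit_pair[OF norm_u norm_v v_ne_u v_ne_neg_u] by blast
qed

theorem convex_polar_wedge_iff_meridian:
  "convex (polar_cone (wedge a b)) \<longleftrightarrow> (\<exists>M. meridian M \<and> inv duality_map ` delta_arc a b \<subseteq> M)"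
  unfolding inv_duality_map_delta_arc convex_polar_wedge_iff_in_span
    inv_arc_in_meridian_iff_in_span ..

lemma inv_duality_map_delta_arc_subset_span:
  assumes "\<exists>M. meridian M \<and> inv duality_map ` delta_arc a b \<subseteq> M"
  shows "inv duality_map ` delta_arc a b \<subseteq> span {inv duality_map a, inv duality_map b}"
  using assms unfolding inv_duality_map_delta_arc inv_arc_in_meridian_iff_in_span u_def[symmetric]
    v_def[symmetric] by blast


lemma delta_arc_subset_sphere_span: "delta_arc a b \<subseteq> span {a, b} \<inter> sphere 0 1"
proof
  fix c assume "c \<in> delta_arc a b"
  then obtain t where c: "c = arc t" unfolding delta_arc_eq by blast
  have "c \<in> span {a, b}" unfolding c arc_coeffs span_pair_iff by blast
  then show "c \<in> span {a, b} \<inter> sphere 0 1" by (simp add: c norm_arc)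
qed
end

section \<open>All wedges\<close>

lemma span_pair_uminus: "span {x, - y} = span {x, y}"
  unfolding span_eq using span_neg[of "- y" "{x, - y}"] span_neg[of y "{x, y}"]
  by (auto intro: span_base)

lemma convex_polar_wedge_if_meridians_preserved:
  assumes uc: "uniformly_convex_space TYPE('a::banach)" and us: "uniformly_smooth_space TYPE('a)"
    and H: "\<forall>Ms::('a \<Rightarrow>\<^sub>L real) set. meridian Ms \<longrightarrow> (\<exists>M::'a set. meridian M \<and> inv duality_map ` Ms \<subseteq> M)"
    and ab: "norm (a::'a \<Rightarrow>\<^sub>L real) = 1" "norm b = 1" "b \<noteq> a" "b \<noteq> - a"
  shows "convex (polar_cone (wedge a b))"
proof -
  interpret wedge_pair a b using uc us ab by (rule wedge_pair.intro)
  obtain M where "meridian M" "inv duality_map ` (span {a, b} \<inter> sphere 0 1) \<subseteq> M"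
    using H meridian_span_unit_pair[OF ab] by blast
  then show ?thesis
    using convex_polar_wedge_iff_meridian delta_arc_subset_sphere_span by blast
qed

lemma inv_duality_map_in_subspace_if_arcs:
  assumes uc: "uniformly_convex_space TYPE('a::banach)" and us: "uniformly_smooth_space TYPE('a)"
    and P: "subspace P" "inv duality_map ` delta_arc a b \<subseteq> P"
      "inv duality_map ` delta_arc a (- b) \<subseteq> P"
    and c: "c \<in> span {a, b}" "norm c = 1"
  shows "(inv duality_map c :: 'a) \<in> P"
proof -
  consider "c \<in> delta_arc a b \<union> delta_arc a (- b)" | "- c \<in> delta_arc a b \<union> delta_arc a (- b)"
    using sphere_span_pair_cases[OF c] by blast
  then show ?thesis
  proof cases
    case 2
    then have "- inv duality_map (- c) \<in> P" using P subspace_neg by blast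
    then show ?thesis by (simp add: inv_duality_map_uminus[OF uc us])
  qed (use P in blast)
qed

text \<open>A meridian through unit vectors \<open>a\<close>, \<open>b\<close> is covered by the arcs \<open>\<delta>(a, b)\<close> and \<open>\<delta>(a, -b)\<close>
  and their antipodes; the images of both arcs lie in the plane of \<open>J\<^sup>-\<^sup>1 a\<close> and \<open>J\<^sup>-\<^sup>1 b\<close>, and
  \<open>J\<^sup>-\<^sup>1\<close> is odd.\<close>

lemma meridians_preserved_if_convex_polar_wedges:
  assumes uc: "uniformly_convex_space TYPE('a::banach)" and us: "uniformly_smooth_space TYPE('a)"
    and H: "\<forall>a b::'a \<Rightarrow>\<^sub>L real. norm a = 1 \<longrightarrow> norm b = 1 \<longrightarrow> b \<noteq> a \<longrightarrow> b \<noteq> - a \<longrightarrow>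
              convex (polar_cone (wedge a b))"
    and Ms: "meridian (Ms :: ('a \<Rightarrow>\<^sub>L real) set)"
  shows "\<exists>M::'a set. meridian M \<and> inv duality_map ` Ms \<subseteq> M"
proof -
  obtain a b where ab: "norm a = 1" "norm b = 1" "b \<noteq> a" "b \<noteq> - a"
    and Ms_eq: "Ms = span {a, b} \<inter> sphere 0 1"
    using meridian_obtain_unit_pair[OF Ms] by blast
  have ab': "norm (- b) = 1" "- b \<noteq> a" "- b \<noteq> - a" using ab by auto
  interpret W1: wedge_pair a b using uc us ab by (rule wedge_pair.intro)
  interpret W2: wedge_pair a "- b" using uc us ab(1) ab' by (rule wedge_pair.intro)
  define P where "P = span {inv duality_map a, inv duality_map b :: 'a}"
  have "inv duality_map ` delta_arc a b \<subseteq> P"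
    using W1.inv_duality_map_delta_arc_subset_span W1.convex_polar_wedge_iff_meridian H ab
    by (simp add: P_def)
  moreover have "inv duality_map ` delta_arc a (- b) \<subseteq> P"
  proof -
    have "span {inv duality_map a, inv duality_map (- b) :: 'a} = P"
      unfolding P_def inv_duality_map_uminus[OF uc us] by (rule span_pair_uminus)
    then show ?thesis
      using W2.inv_duality_map_delta_arc_subset_span W2.convex_polar_wedge_iff_meridian H ab(1) ab'
      by simp
  qed
  ultimately have "inv duality_map c \<in> P" if "c \<in> Ms" for c
    using that Ms_eq by (intro inv_duality_map_in_subspace_if_arcs[OF uc us]) (auto simp: P_def)
  then have "inv duality_map ` Ms \<subseteq> P \<inter> sphere 0 1"
    using Ms_eq by (auto simp: norm_inv_duality_map[OF uc us])
  moreover have "meridian (P \<inter> sphere 0 1)"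
    unfolding P_def W1.u_def[symmetric] W1.v_def[symmetric]
    by (rule meridian_span_unit_pair[OF W1.norm_u W1.norm_v W1.v_ne_u W1.v_ne_neg_u])
  ultimately show ?thesis by blast
qed

theorem mainTheorem6:
  assumes "uniformly_convex_space TYPE('a::banach)"
    and "uniformly_smooth_space TYPE('a)"
  shows "(\<forall>a b::'a \<Rightarrow>\<^sub>L real. norm a = 1 \<longrightarrow> norm b = 1 \<longrightarrow> b \<noteq> a \<longrightarrow> b \<noteq> - a \<longrightarrow>
            (convex (polar_cone (wedge a b)) \<longleftrightarrow>
             (\<exists>M::'a set. meridian M \<and> inv duality_map ` delta_arc a b \<subseteq> M)))
       \<and> ((\<forall>a b::'a \<Rightarrow>\<^sub>L real. norm a = 1 \<longrightarrow> norm b = 1 \<longrightarrow> b \<noteq> a \<longrightarrow> b \<noteq> - a \<longrightarrow>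
             convex (polar_cone (wedge a b)))
          \<longleftrightarrow> (\<forall>Ms::('a \<Rightarrow>\<^sub>L real) set. meridian Ms \<longrightarrow>
                 (\<exists>M::'a set. meridian M \<and> inv duality_map ` Ms \<subseteq> M)))"
proof (intro conjI allI impI)
  fix a b :: "'a \<Rightarrow>\<^sub>L real"
  assume "norm a = 1" "norm b = 1" "b \<noteq> a" "b \<noteq> - a"
  then show "convex (polar_cone (wedge a b)) \<longleftrightarrow>
      (\<exists>M::'a set. meridian M \<and> inv duality_map ` delta_arc a b \<subseteq> M)"
    by (rule wedge_pair.convex_polar_wedge_iff_meridian[OF wedge_pair.intro[OF assms]])
next
  show "(\<forall>a b::'a \<Rightarrow>\<^sub>L real. norm a = 1 \<longrightarrow> norm b = 1 \<longrightarrow> b \<noteq> a \<longrightarrow> b \<noteq> - a \<longrightarrow>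
          convex (polar_cone (wedge a b)))
      \<longleftrightarrow> (\<forall>Ms::('a \<Rightarrow>\<^sub>L real) set. meridian Ms \<longrightarrow>
          (\<exists>M::'a set. meridian M \<and> inv duality_map ` Ms \<subseteq> M))"
    using convex_polar_wedge_if_meridians_preserved[OF assms]
      meridians_preserved_if_convex_polar_wedges[OF assms]
    by (intro iffI allI impI) simp_all
qed

end
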